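(* Let $n,d\ge2$ and $\mathcal T=\sum_{k=1}^{n+1}\mathbf v_k^{\otimes d}$. (i) If $d=2$, every $\mathbf v\in\mathbb R^n$ with $\|\mathbf v\|=1$ is an eigenvector of $\mathcal T$ with eigenvalue $\mu=1+\frac1n$. (ii) If $d\ge3$ is odd, $\mathbf v\in\mathbb R^n$ with $\|\mathbf v\|=1$ is an eigenvector of $\mathcal T$ if and only if there is a nonempty $K\subset\{1,\ldots,n+1\}$ with $|K|\le n$ such that $$\mathbf v=\frac{\sum_{k\in K}\mathbf v_k}{\|\sum_{k\in K}\mathbf v_k\|}=\frac{\sum_{k\in K}\mathbf v_k}{\sqrt{|K|(n+1-|K|)/n}},$$ and then the eigenvalue is $\mu=\dfrac{(n+1-|K|)^{d-1}-|K|^{d-1}}{n^{d/2}\,(|K|(n+1-|K|))^{d/2-1}}$. In particular $\mu=0$ exactly when $2|K|=n+1$, so for $n$ even all eigenvalues are nonzero. (iii) If $d\ge4$ is even, $\mathbf v\in\mathbb R^n$ with $\|\mathbf v\|=1$ is an eigenvector of $\mathcal T$ if and only if either (a) there is a nonempty $K\subset\{1,\ldots,n+1\}$ with $|K|\le n$ such that $\mathbf v=\sum_{k\in K}\mathbf v_k/\|\sum_{k\in K}\mathbf v_k\|$, with positive eigenvalue $\mu=\dfrac{(n+1-|K|)^{d-1}+|K|^{d-1}}{n^{d/2}(|K|(n+1-|K|))^{d/2-1}}$; or (b) there are nonempty disjoint $K_1,K_2\subset\{1,\ldots,n+1\}$, each of cardinality at most $n$, and numbers $0<a\le s^*<b\le1$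 with $|K_1|a+|K_2|b=1$ and $\frac{g(a)}{a}=\frac{g(b)}{b}$, such that $$\mathbf v=\frac{a\sum_{k\in K_1}\mathbf v_k+b\sum_{k\in K_2}\mathbf v_k}{\sqrt{\big((n+1)a^2|K_1|+(n+1)b^2|K_2|-1\big)/n}},$$ with positive eigenvalue $$\mu=\frac{|K_1|((n+1)a-1)^d+|K_2|((n+1)b-1)^d+n+1-|K_1|-|K_2|}{n^{d/2}\big((n+1)a^2|K_1|+(n+1)b^2|K_2|-1\big)^{d/2}}.$$
   Context: Simplex frame: for $n\ge 2$, $\mathbf v_k=\sqrt{1+\frac1n}\,\mathbf e_k-\frac{1}{n^{3/2}}(\sqrt{n+1}-1)\mathbf 1_n$ ($1\le k\le n$), $\mathbf v_{n+1}=-\frac{1}{\sqrt n}\mathbf 1_n$, with $\mathbf e_k$ unit vectors in $\mathbb R^n$, $\mathbf 1_n=(1,\ldots,1)^\top$; $\|\mathbf v_k\|=1$, $\langle\mathbf v_k,\mathbf v_j\rangle=-\frac1n$ ($k\ne j$), $\sum_k\mathbf v_k=\mathbf 0$. $\mathcal T=\sum_{k=1}^{n+1}\mathbf v_k^{\otimes d}$ with $(\mathbf v^{\otimes d})_{i_1\ldots i_d}=v_{i_1}\cdots v_{i_d}$; $\mathcal T\cdot\mathbf v^{d-1}=\sum_k\langle\mathbf v,\mathbf v_k\rangle^{d-1}\mathbf v_k$. $\mathbf v\ne\mathbf 0$ is an eigenvector with eigenvalue $\mu$ if $\mathcal T\cdot\mathbf v^{d-1}=\mu\mathbf v$. $g(s)=((n+1)s-1)^{d-1}-(-1)^{d-1}$.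 For even $d\ge4$, $s^*$ is the unique point in $[\frac1n,\frac2{n+1})$ such that $p(s)=g(s)/s$ is strictly decreasing on $[0,s^*]$ and strictly increasing on $[s^*,\infty)$. *)

theory Defs
  imports "HOL-Analysis.Analysis"
begin

text \<open>Vectors of R^n are elements of real^'n with n = CARD('n).  The n+1 simplex
  frame vectors v_1..v_{n+1} are indexed by 'n option: Some i corresponds to
  v_k with e_k = axis i 1, and None corresponds to v_{n+1}.\<close>

definition simplex_vec :: "'n::finite option \<Rightarrow> real^'n" where
  "simplex_vec k = (case k of
      Some i \<Rightarrow> (\<chi> j. sqrt (1 + 1 / real CARD('n)) * (if j = i then 1 else 0)
                     - (sqrt (real CARD('n) + 1) - 1) / (real CARD('n) powr (3/2)))
    | None \<Rightarrow> (\<chi> j. - 1 / sqrt (real CARD('n))))"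

text \<open>A tensor of order d on R^n, given by its entries T i_1 ... i_d
  (indices passed as a list of length d).\<close>

definition simplex_tensor :: "'n::finite list \<Rightarrow> real" where
  "simplex_tensor is = (\<Sum>k\<in>UNIV. prod_list (map (\<lambda>i. simplex_vec k $ i) is))"

definition tensor_apply :: "('n::finite list \<Rightarrow> real) \<Rightarrow> nat \<Rightarrow> real^'n \<Rightarrow> real^'n" where
  "tensor_apply T d v = (\<chi> i. \<Sum>js\<in>{js. length js = d - 1}.
       T (i # js) * prod_list (map (\<lambda>j. v $ j) js))"

definition tensor_eigenpair ::
  "('n::finite list \<Rightarrow> real) \<Rightarrow> nat \<Rightarrow> real^'n \<Rightarrow> real \<Rightarrow> bool" where
  "tensor_eigenpair T d v \<mu> \<longleftrightarrow> v \<noteq> 0 \<and> tensor_apply T d v = \<mu> *\<^sub>R v"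

definition g_fun :: "nat \<Rightarrow> nat \<Rightarrow> real \<Rightarrow> real" where
  "g_fun n d s = ((real n + 1) * s - 1) ^ (d - 1) - (-1) ^ (d - 1)"

text \<open>s*: p(s) = g(s)/s strictly decreasing on (0,s*] and strictly increasing on
  [s*,\<infinity>); the point s = 0 is excluded since g(0)/0 is only defined as a limit.\<close>

definition s_star :: "nat \<Rightarrow> nat \<Rightarrow> real" where
  "s_star n d = (THE s. 1 / real n \<le> s \<and> s < 2 / (real n + 1) \<and>
      strict_antimono_on {0<..s} (\<lambda>t. g_fun n d t / t) \<and>
      strict_mono_on {s..} (\<lambda>t. g_fun n d t / t))"

end

theory Submission
  imports Defs
begin

text \<open>Write x_k = v \<bullet> v_k for the frame coordinates of v. Because the simplex frame is tight
  (v = n/(n+1) \<Sum>_k x_k v_k) and its vectors sum to zero, T v^(d-1) = \<mu> v says exactly that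
  (n + 1) x_k^(d-1) - n \<mu> x_k is the same for all k, and then \<mu> = \<Sum>_k x_k^d when |v| = 1.
  By Rolle's theorem y \<mapsto> (n + 1) y^(d-1) - n \<mu> y takes a value at most twice for odd d and at
  most three times for even d. With two coordinate values, v is the normalised sum of the frame
  vectors over a subset K. With three values \<gamma> < \<beta> < \<alpha> (even d), writing the coordinates as
  -\<gamma> ((n + 1) s - 1) with s \<in> {0, a, b} turns the equality of the levels into g(a)/a = g(b)/b,
  which places a and b on either side of the minimum s* of g(s)/s. Conversely every such vector
  satisfies the constant-level condition, and d = 2 is the tight-frame identity itself.\<close>

section \<open>The simplex frame\<close>

lemma sum_UNIV_option:
  "(\<Sum>k\<in>UNIV. f k) = f None + (\<Sum>i\<in>UNIV. f (Some i))"
  for f :: "'a::finite option \<Rightarrow> 'b::comm_monoid_add"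
  by (simp add: UNIV_option_conv sum.reindex)

lemma sum_UNIV_if_mem:
  fixes K :: "'n::finite option set"
  shows "(\<Sum>j\<in>UNIV. if j \<in> K then p else q)
     = real (card K) * p + (real CARD('n) + 1 - real (card K)) * (q :: real)"
proof -
  have "card K \<le> CARD('n) + 1"
    using card_mono[of "UNIV :: 'n option set" K] by simp
  moreover have "card (- K) = CARD('n) + 1 - card K"
    by (simp add: Compl_eq_Diff_UNIV card_Diff_subset)
  ultimately show ?thesis
    by (simp add: sum.If_cases Compl_eq_Diff_UNIV[symmetric])
qed

lemma sum_UNIV_if_mem_disjoint:
  fixes K1 K2 :: "'n::finite option set"
  assumes "K1 \<inter> K2 = {}"
  shows "(\<Sum>j\<in>UNIV. if j \<in> K1 then p else if j \<in> K2 then q else r)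
     = real (card K1) * p + real (card K2) * q
       + (real CARD('n) + 1 - real (card K1) - real (card K2)) * (r :: real)"
proof -
  have "(\<Sum>j\<in>UNIV. if j \<in> K1 then p else if j \<in> K2 then q else r)
      = (\<Sum>j\<in>UNIV. if j \<in> K1 then p - r else 0) + (\<Sum>j\<in>UNIV. if j \<in> K2 then q - r else 0)
        + (\<Sum>j\<in>(UNIV :: 'n option set). r)"
    unfolding sum.distrib[symmetric] using assms by (intro sum.cong) auto
  also have "\<dots> = real (card K1) * (p - r) + real (card K2) * (q - r) + (real CARD('n) + 1) * r"
    by (simp add: sum.If_cases)
  finally show ?thesis
    by (simp add: algebra_simps)
qed

text \<open>The coordinates of the frame vectors: only the relations between the three constants matter.\<close>

lemma simplex_vec_components:
  obtains a c g :: real where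
    "\<forall>i j. (simplex_vec (Some i) :: real^'n::finite) $ j = (if j = i then a else 0) - c"
    "\<forall>j. (simplex_vec None :: real^'n) $ j = - g"
    "a\<^sup>2 = 1 + 1 / real CARD('n)" "a - real CARD('n) * c = g" "g\<^sup>2 = 1 / real CARD('n)"
    "real CARD('n) * c\<^sup>2 - 2 * a * c = - 1 / real CARD('n)"
proof
  define N where "N = real CARD('n)"
  have N0: "N > 0" by (simp add: N_def)
  define s r where "s = sqrt N" and "r = sqrt (N + 1)"
  have s0: "s > 0" and ss: "s\<^sup>2 = N" and rr: "r\<^sup>2 = N + 1"
    using N0 by (simp_all add: s_def r_def)
  have "N powr (3/2) = N powr (1 + 1/2)"
    by simp
  also have "\<dots> = N powr 1 * N powr (1/2)"
    by (rule powr_add)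
  also have "\<dots> = N * s"
    using N0 by (simp add: s_def powr_half_sqrt)
  finally have p32: "N powr (3/2) = N * s" .
  have a: "sqrt (1 + 1 / N) = r / s"
    using N0 by (simp add: r_def s_def real_sqrt_divide[symmetric] field_simps)
  show "\<forall>i j. (simplex_vec (Some i) :: real^'n) $ j
      = (if j = i then sqrt (1 + 1 / real CARD('n)) else 0)
        - (sqrt (real CARD('n) + 1) - 1) / real CARD('n) powr (3/2)"
    by (simp add: simplex_vec_def)
  show "\<forall>j. (simplex_vec None :: real^'n) $ j = - (1 / sqrt (real CARD('n)))"
    by (simp add: simplex_vec_def)
  show "(sqrt (1 + 1 / real CARD('n)))\<^sup>2 = 1 + 1 / real CARD('n)"
    by simp
  show "sqrt (1 + 1 / real CARD('n)) - real CARD('n) * ((sqrt (real CARD('n) + 1) - 1) / real CARD('n) powr (3/2))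
      = 1 / sqrt (real CARD('n))"
    unfolding N_def[symmetric] a p32 r_def[symmetric] s_def[symmetric]
    using N0 s0 by (simp add: field_simps)
  show "(1 / sqrt (real CARD('n)))\<^sup>2 = 1 / real CARD('n)"
    by (simp add: power_divide)
  show "real CARD('n) * ((sqrt (real CARD('n) + 1) - 1) / real CARD('n) powr (3/2))\<^sup>2
      - 2 * sqrt (1 + 1 / real CARD('n)) * ((sqrt (real CARD('n) + 1) - 1) / real CARD('n) powr (3/2))
      = - 1 / real CARD('n)"
  proof -
    have "N * ((r - 1) / (N * s))\<^sup>2 - 2 * (r / s) * ((r - 1) / (N * s)) = - (r\<^sup>2 - 1) / (N * s\<^sup>2)"
      using N0 s0 by (simp add: field_simps power2_eq_square)
    also have "\<dots> = - 1 / N"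
      using N0 by (simp add: rr ss)
    finally show ?thesis
      unfolding N_def[symmetric] a p32 r_def[symmetric] s_def[symmetric] .
  qed
qed

lemma sum_shifted_delta:
  "(\<Sum>l\<in>(UNIV :: 'n::finite set). (if l = i then a else 0) - c) = a - real CARD('n) * c"
  by (simp add: sum_subtractf)

lemma sum_shifted_delta_mult:
  "(\<Sum>l\<in>(UNIV :: 'n::finite set). ((if l = i then a else 0) - c) * ((if l = i' then a else 0) - c))
     = (if i = i' then a\<^sup>2 else 0) - 2 * a * c + real CARD('n) * c\<^sup>2"
proof -
  have "((if l = i then a else 0) - c) * ((if l = i' then a else 0) - c)
      = (if l = i then (if i = i' then a\<^sup>2 else 0) else 0) - (if l = i then a * c else 0)
        - (if l = i' then a * c else 0) + c\<^sup>2" for l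
    by (auto simp: algebra_simps power2_eq_square)
  then show ?thesis
    by (simp add: sum.distrib sum_subtractf)
qed

lemma inner_simplex_vec:
  "simplex_vec j \<bullet> (simplex_vec k :: real^'n::finite) = (if j = k then 1 else - 1 / real CARD('n))"
proof -
  obtain a c g where vec: "\<forall>i l. (simplex_vec (Some i) :: real^'n) $ l = (if l = i then a else 0) - c"
      "\<forall>l. (simplex_vec None :: real^'n) $ l = - g"
    and rel: "a\<^sup>2 = 1 + 1 / real CARD('n)" "a - real CARD('n) * c = g" "g\<^sup>2 = 1 / real CARD('n)"
      "real CARD('n) * c\<^sup>2 - 2 * a * c = - 1 / real CARD('n)"
    by (rule simplex_vec_components)
  have mixed: "simplex_vec None \<bullet> (simplex_vec (Some i) :: real^'n) = - 1 / real CARD('n)" for i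
  proof -
    have "simplex_vec None \<bullet> (simplex_vec (Some i) :: real^'n) = - g * (a - real CARD('n) * c)"
      by (simp add: inner_vec_def vec sum_negf sum_shifted_delta flip: sum_distrib_left)
    then show ?thesis
      using rel(2,3) by (simp add: power2_eq_square)
  qed
  show ?thesis
  proof (cases j; cases k)
    assume "j = None" "k = None"
    then show ?thesis
      using rel(3) by (simp add: inner_vec_def vec power2_eq_square)
  next
    fix i' assume "j = None" "k = Some i'"
    then show ?thesis
      using mixed by simp
  next
    fix i assume "j = Some i" "k = None"
    then show ?thesis
      using mixed by (simp add: inner_commute)
  next
    fix i i' assume "j = Some i" "k = Some i'"
    then show ?thesis
      using rel(1,4) by (auto simp: inner_vec_def vec sum_shifted_delta_mult)
  qed
qed

lemma sum_simplex_vec: "(\<Sum>k\<in>UNIV. simplex_vec k :: real^'n::finite) = 0"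
proof -
  have row: "(\<Sum>k\<in>UNIV. simplex_vec j \<bullet> (simplex_vec k :: real^'n)) = 0" for j
  proof -
    have "(\<Sum>k\<in>UNIV. simplex_vec j \<bullet> (simplex_vec k :: real^'n))
        = (\<Sum>k\<in>UNIV. (if k = j then 1 + 1 / real CARD('n) else 0) - 1 / real CARD('n))"
      by (rule sum.cong) (auto simp: inner_simplex_vec)
    also have "\<dots> = 0"
      by (simp add: sum_subtractf) (simp add: field_simps)
    finally show ?thesis .
  qed
  have "(norm (\<Sum>k\<in>UNIV. simplex_vec k :: real^'n))\<^sup>2 = 0"
    using row by (simp add: power2_norm_eq_inner inner_sum_left inner_sum_right inner_commute)
  then show ?thesis
    by simp
qed

lemma simplex_frame_expansion:
  fixes w :: "real^'n::finite"
  shows "w = (real CARD('n) / (real CARD('n) + 1)) *\<^sub>R (\<Sum>k\<in>UNIV. (w \<bullet> simplex_vec k) *\<^sub>R simplex_vec k)"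
proof -
  obtain a c g where vec: "\<forall>i l. (simplex_vec (Some i) :: real^'n) $ l = (if l = i then a else 0) - c"
      "\<forall>l. (simplex_vec None :: real^'n) $ l = - g"
    and rel: "a\<^sup>2 = 1 + 1 / real CARD('n)" "a - real CARD('n) * c = g" "g\<^sup>2 = 1 / real CARD('n)"
      "real CARD('n) * c\<^sup>2 - 2 * a * c = - 1 / real CARD('n)"
    by (rule simplex_vec_components)
  have frame_op: "(\<Sum>k\<in>UNIV. (simplex_vec k :: real^'n) $ i * simplex_vec k $ j)
      = (if i = j then 1 + 1 / real CARD('n) else 0)" for i j
  proof -
    have "(\<Sum>l\<in>UNIV. ((if i = l then a else 0) - c) * ((if j = l then a else 0) - c))
        = (if i = j then a\<^sup>2 else 0) - 2 * a * c + real CARD('n) * c\<^sup>2"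
      using sum_shifted_delta_mult[of i a c j] by (simp add: eq_commute)
    then show ?thesis
      using rel(1,3,4) by (simp add: sum_UNIV_option vec power2_eq_square)
  qed
  have "(\<Sum>k\<in>UNIV. (w \<bullet> simplex_vec k) *\<^sub>R (simplex_vec k :: real^'n)) $ i
      = (\<Sum>l\<in>UNIV. w $ l * (\<Sum>k\<in>UNIV. (simplex_vec k :: real^'n) $ l * simplex_vec k $ i))" for i
    by (simp add: inner_vec_def sum_distrib_right sum_distrib_left mult.assoc)
      (rule sum.swap)
  then have "(\<Sum>k\<in>UNIV. (w \<bullet> simplex_vec k) *\<^sub>R (simplex_vec k :: real^'n)) = (1 + 1 / real CARD('n)) *\<^sub>R w"
    by (simp add: vec_eq_iff frame_op if_distrib cong: if_cong)
  then have "(real CARD('n) / (real CARD('n) + 1)) *\<^sub>R (\<Sum>k\<in>UNIV. (w \<bullet> simplex_vec k) *\<^sub>R simplex_vec k)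
      = (real CARD('n) / (real CARD('n) + 1) * (1 + 1 / real CARD('n))) *\<^sub>R w"
    by simp
  also have "real CARD('n) / (real CARD('n) + 1) * (1 + 1 / real CARD('n)) = 1"
    by (simp add: divide_simps)
  finally show ?thesis
    by simp
qed

lemma simplex_vec_inner_eqI:
  fixes u w :: "real^'n::finite"
  assumes "\<And>k. u \<bullet> simplex_vec k = w \<bullet> simplex_vec k"
  shows "u = w"
  by (subst simplex_frame_expansion, subst (2) simplex_frame_expansion) (simp add: assms)

lemma sum_inner_simplex_vec: "(\<Sum>k\<in>UNIV. (v :: real^'n::finite) \<bullet> simplex_vec k) = 0"
  by (simp add: inner_sum_right[symmetric] sum_simplex_vec)

lemma ex_inner_simplex_vec_nonzero:
  assumes "(v :: real^'n::finite) \<noteq> 0"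
  shows "\<exists>k. v \<bullet> simplex_vec k \<noteq> 0"
  using assms simplex_vec_inner_eqI[of v 0] by auto

lemma prod_list_map_mult:
  "prod_list (map f xs) * prod_list (map g xs) = prod_list (map (\<lambda>x. f x * g x) xs)"
  for f g :: "'a \<Rightarrow> 'b::comm_monoid_mult"
  by (induction xs) (simp_all add: ac_simps)

lemma sum_prod_list_lists_length:
  "(\<Sum>xs\<in>{xs. length xs = m}. prod_list (map f xs)) = (\<Sum>x\<in>UNIV. f x) ^ m"
  for f :: "'a::finite \<Rightarrow> 'b::comm_semiring_1"
proof (induction m)
  case 0
  have "{xs :: 'a list. length xs = 0} = {[]}"
    by auto
  then show ?case
    by simp
next
  case (Suc m)
  have lists: "{xs :: 'a list. length xs = Suc m} = (\<lambda>(x, xs). x # xs) ` (UNIV \<times> {xs. length xs = m})"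
    by (auto simp: length_Suc_conv image_iff)
  have "inj_on (\<lambda>(x, xs). x # xs) (UNIV \<times> {xs :: 'a list. length xs = m})"
    by (auto simp: inj_on_def)
  then have "(\<Sum>xs\<in>{xs. length xs = Suc m}. prod_list (map f xs))
      = (\<Sum>(x, xs)\<in>UNIV \<times> {xs. length xs = m}. f x * prod_list (map f xs))"
    unfolding lists by (subst sum.reindex) (auto intro!: sum.cong)
  also have "\<dots> = (\<Sum>x\<in>UNIV. f x) * (\<Sum>xs\<in>{xs. length xs = m}. prod_list (map f xs))"
    by (simp add: sum.cartesian_product[symmetric] sum_product)
  finally show ?case
    using Suc by simp
qed

lemma tensor_apply_simplex_tensor:
  fixes v :: "real^'n::finite"
  shows "tensor_apply simplex_tensor d v = (\<Sum>k\<in>UNIV. (v \<bullet> simplex_vec k) ^ (d - 1) *\<^sub>R simplex_vec k)"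
proof -
  have "tensor_apply simplex_tensor d v $ i
      = (\<Sum>k\<in>UNIV. (simplex_vec k :: real^'n) $ i *
          (\<Sum>js\<in>{js. length js = d - 1}. prod_list (map (\<lambda>j. simplex_vec k $ j * v $ j) js)))" for i
    by (simp add: tensor_apply_def simplex_tensor_def sum_distrib_left sum_distrib_right
        prod_list_map_mult mult.assoc) (rule sum.swap)
  then show ?thesis
    by (simp add: vec_eq_iff sum_prod_list_lists_length inner_vec_def mult.commute)
qed

lemma inner_simplex_comb:
  "(\<Sum>k\<in>UNIV. c k *\<^sub>R (simplex_vec k :: real^'n::finite)) \<bullet> simplex_vec j
     = ((real CARD('n) + 1) * c j - (\<Sum>k\<in>UNIV. c k)) / real CARD('n)"
proof -
  have "(\<Sum>k\<in>UNIV. c k *\<^sub>R (simplex_vec k :: real^'n)) \<bullet> simplex_vec j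
      = (\<Sum>k\<in>UNIV. c k * (if k = j then 1 else - 1 / real CARD('n)))"
    by (simp add: inner_sum_left inner_simplex_vec)
  also have "\<dots> = (\<Sum>k\<in>UNIV. (if k = j then c j * (1 + 1 / real CARD('n)) else 0) - c k / real CARD('n))"
    by (rule sum.cong) (auto simp: field_simps)
  also have "\<dots> = c j * (1 + 1 / real CARD('n)) - (\<Sum>k\<in>UNIV. c k) / real CARD('n)"
    by (simp add: sum_subtractf sum_divide_distrib)
  also have "\<dots> = ((real CARD('n) + 1) * c j - (\<Sum>k\<in>UNIV. c k)) / real CARD('n)"
    by (simp add: field_simps)
  finally show ?thesis .
qed

lemma norm_simplex_comb_squared:
  "(norm (\<Sum>k\<in>UNIV. c k *\<^sub>R (simplex_vec k :: real^'n::finite)))\<^sup>2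
     = ((real CARD('n) + 1) * (\<Sum>k\<in>UNIV. (c k)\<^sup>2) - (\<Sum>k\<in>UNIV. c k)\<^sup>2) / real CARD('n)"
proof -
  let ?w = "\<Sum>k\<in>UNIV. c k *\<^sub>R (simplex_vec k :: real^'n)"
  have "(norm ?w)\<^sup>2 = (\<Sum>j\<in>UNIV. c j * (?w \<bullet> simplex_vec j))"
    by (simp add: power2_norm_eq_inner inner_sum_right)
  also have "\<dots> = (\<Sum>j\<in>UNIV. ((real CARD('n) + 1) * (c j)\<^sup>2 - c j * (\<Sum>k\<in>UNIV. c k)) / real CARD('n))"
    by (simp add: inner_simplex_comb field_simps power2_eq_square)
  finally show ?thesis
    by (simp add: sum_divide_distrib[symmetric] sum_subtractf sum_distrib_left[symmetric]
        sum_distrib_right[symmetric] power2_eq_square)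
qed

section \<open>The eigen-equation in frame coordinates\<close>

lemma tensor_eigenpair_coord_eq:
  fixes v :: "real^'n::finite"
  assumes "tensor_eigenpair simplex_tensor d v \<mu>"
  shows "(real CARD('n) + 1) * (v \<bullet> simplex_vec j) ^ (d - 1) - real CARD('n) * \<mu> * (v \<bullet> simplex_vec j)
      = (\<Sum>k\<in>UNIV. (v \<bullet> simplex_vec k) ^ (d - 1))"
proof -
  have "(\<Sum>k\<in>UNIV. (v \<bullet> simplex_vec k) ^ (d - 1) *\<^sub>R simplex_vec k) = \<mu> *\<^sub>R v"
    using assms by (simp add: tensor_eigenpair_def tensor_apply_simplex_tensor)
  from arg_cong[OF this, of "\<lambda>w. w \<bullet> simplex_vec j"]
  show ?thesis
    by (simp add: inner_simplex_comb field_simps)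
qed

lemma tensor_eigenpairI:
  fixes v :: "real^'n::finite"
  assumes "v \<noteq> 0"
    and "\<And>j. (real CARD('n) + 1) * (v \<bullet> simplex_vec j) ^ (d - 1) - real CARD('n) * \<mu> * (v \<bullet> simplex_vec j) = c"
  shows "tensor_eigenpair simplex_tensor d v \<mu>"
proof -
  let ?S = "\<Sum>k\<in>UNIV. (v \<bullet> simplex_vec k) ^ (d - 1)"
  have "(\<Sum>j\<in>UNIV. (real CARD('n) + 1) * (v \<bullet> simplex_vec j) ^ (d - 1)
        - real CARD('n) * \<mu> * (v \<bullet> simplex_vec j)) = (real CARD('n) + 1) * c"
    using assms(2) by simp
  then have c: "c = ?S"
    by (simp add: sum_subtractf sum_distrib_left[symmetric] sum_inner_simplex_vec)
  have "(\<Sum>k\<in>UNIV. (v \<bullet> simplex_vec k) ^ (d - 1) *\<^sub>R simplex_vec k) = \<mu> *\<^sub>R v"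
    by (rule simplex_vec_inner_eqI) (use assms(2) c in \<open>simp add: inner_simplex_comb field_simps\<close>)
  then show ?thesis
    using assms(1) by (simp add: tensor_eigenpair_def tensor_apply_simplex_tensor)
qed

lemma tensor_eigenpair_eigenvalue:
  fixes v :: "real^'n::finite"
  assumes "tensor_eigenpair simplex_tensor d v \<mu>" "norm v = 1" "d \<ge> 1"
  shows "\<mu> = (\<Sum>k\<in>UNIV. (v \<bullet> simplex_vec k) ^ d)"
proof -
  have eq: "(\<Sum>k\<in>UNIV. (v \<bullet> simplex_vec k) ^ (d - 1) *\<^sub>R simplex_vec k) = \<mu> *\<^sub>R v"
    using assms(1) by (simp add: tensor_eigenpair_def tensor_apply_simplex_tensor)
  have "\<mu> = (\<mu> *\<^sub>R v) \<bullet> v"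
    using assms(2) by (simp add: power2_norm_eq_inner[symmetric])
  also have "\<dots> = (\<Sum>k\<in>UNIV. (v \<bullet> simplex_vec k) ^ (d - 1) * (v \<bullet> simplex_vec k))"
    unfolding eq[symmetric] inner_sum_left inner_scaleR_left by (simp add: inner_commute)
  also have "\<dots> = (\<Sum>k\<in>UNIV. (v \<bullet> simplex_vec k) ^ d)"
    using assms(3) by (intro sum.cong refl power_minus_mult) simp
  finally show ?thesis .
qed

lemma tensor_eigenpair_even_eigenvalue_pos:
  fixes v :: "real^'n::finite"
  assumes "tensor_eigenpair simplex_tensor d v \<mu>" "norm v = 1" "even d" "d \<ge> 2"
  shows "\<mu> > 0"
proof -
  have "v \<noteq> 0"
    using assms(2) by auto
  then obtain j where j: "v \<bullet> simplex_vec j \<noteq> 0"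
    using ex_inner_simplex_vec_nonzero by blast
  have "0 < (v \<bullet> simplex_vec j) ^ d"
    using j assms(3) by (simp add: zero_less_power_eq)
  also have "\<dots> \<le> (\<Sum>k\<in>UNIV. (v \<bullet> simplex_vec k) ^ d)"
    by (rule member_le_sum) (auto simp: assms(3) zero_le_even_power)
  finally show ?thesis
    using tensor_eigenpair_eigenvalue[OF assms(1,2)] assms(4) by simp
qed

lemma tensor_eigenpair_unique_eigenvalue:
  assumes "tensor_eigenpair T d v \<mu>" "tensor_eigenpair T d v \<mu>'"
  shows "\<mu> = \<mu>'"
  using assms by (auto simp: tensor_eigenpair_def)

section \<open>Level sets of y \<mapsto> A y^m - B y\<close>

lemma odd_power_strict_mono:
  fixes a b :: real
  assumes "odd n" "a < b"
  shows "a ^ n < b ^ n"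
proof -
  have n0: "n > 0"
    using assms(1) by (rule odd_pos)
  consider "0 \<le> a" | "b \<le> 0" | "a < 0" "0 < b"
    by linarith
  then show ?thesis
  proof cases
    case 1
    then show ?thesis
      using assms n0 by (simp add: power_strict_mono)
  next
    case 2
    then have "(- b) ^ n < (- a) ^ n"
      using assms n0 by (intro power_strict_mono) auto
    then show ?thesis
      using assms(1) by simp
  next
    case 3
    then show ?thesis
      using assms(1) zero_le_odd_power[of n a] by (smt (verit) zero_less_power)
  qed
qed

lemma equal_values_imp_critical_point:
  fixes A B x y :: real
  assumes "x < y" "A * x ^ m - B * x = A * y ^ m - B * y"
  shows "\<exists>z. x < z \<and> z < y \<and> A * real m * z ^ (m - 1) = B"
proof -
  have "\<And>t. DERIV (\<lambda>t. A * t ^ m - B * t) t :> A * (real m * t ^ (m - 1)) - B"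
    by (auto intro!: derivative_eq_intros)
  from MVT2[OF assms(1) this] obtain z where z: "x < z" "z < y"
    "A * y ^ m - B * y - (A * x ^ m - B * x) = (y - x) * (A * (real m * z ^ (m - 1)) - B)"
    by blast
  then have "A * (real m * z ^ (m - 1)) - B = 0"
    using assms by simp
  with z show ?thesis
    by (intro exI[of _ z]) (simp add: algebra_simps)
qed

text \<open>Rolle: the derivative A m y^(m-1) - B has one zero for even m, at most two for odd m.\<close>

lemma even_power_sub_linear_no_three_equal:
  fixes A B x y z :: real
  assumes "even m" "m \<ge> 2" "A > 0" "x < y" "y < z"
    "A * x ^ m - B * x = A * y ^ m - B * y" "A * y ^ m - B * y = A * z ^ m - B * z"
  shows False
proof -
  obtain p where p: "x < p" "p < y" "A * real m * p ^ (m - 1) = B"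
    using equal_values_imp_critical_point[OF assms(4,6)] by blast
  obtain q where q: "y < q" "q < z" "A * real m * q ^ (m - 1) = B"
    using equal_values_imp_critical_point[OF assms(5,7)] by blast
  have "p ^ (m - 1) < q ^ (m - 1)"
    using p q assms(1,2) by (intro odd_power_strict_mono) auto
  then have "A * real m * p ^ (m - 1) < A * real m * q ^ (m - 1)"
    using assms(2,3) by simp
  then show False
    using p(3) q(3) by simp
qed

lemma odd_power_sub_linear_no_four_equal:
  fixes A B x y z w :: real
  assumes "odd m" "m \<ge> 3" "A > 0" "x < y" "y < z" "z < w"
    "A * x ^ m - B * x = A * y ^ m - B * y" "A * y ^ m - B * y = A * z ^ m - B * z"
    "A * z ^ m - B * z = A * w ^ m - B * w"
  shows False
proof -
  obtain p where p: "x < p" "p < y" "A * real m * p ^ (m - 1) = B"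
    using equal_values_imp_critical_point[OF assms(4,7)] by blast
  obtain q where q: "y < q" "q < z" "A * real m * q ^ (m - 1) = B"
    using equal_values_imp_critical_point[OF assms(5,8)] by blast
  obtain r where r: "z < r" "r < w" "A * real m * r ^ (m - 1) = B"
    using equal_values_imp_critical_point[OF assms(6,9)] by blast
  have "A * real m \<noteq> 0"
    using assms(2,3) by simp
  then have "p ^ (m - 1) = q ^ (m - 1)" "q ^ (m - 1) = r ^ (m - 1)"
    using p(3) q(3) r(3) by (metis mult_left_cancel)+
  then have "\<bar>p\<bar> ^ (m - 1) = \<bar>q\<bar> ^ (m - 1)" "\<bar>q\<bar> ^ (m - 1) = \<bar>r\<bar> ^ (m - 1)"
    using assms(1) by (simp_all add: power_even_abs)
  then have "\<bar>p\<bar> = \<bar>q\<bar>" "\<bar>q\<bar> = \<bar>r\<bar>"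
    using assms(2) by (simp_all add: power_eq_iff_eq_base)
  then show False
    using p q r by linarith
qed

section \<open>Coordinate values of eigenvectors\<close>

lemma ex_coord_min_max:
  fixes v :: "real^'n::finite"
  assumes "v \<noteq> 0"
  obtains \<gamma> \<alpha> ja jg where "\<gamma> < \<alpha>" "\<forall>j. \<gamma> \<le> v \<bullet> simplex_vec j \<and> v \<bullet> simplex_vec j \<le> \<alpha>"
    "v \<bullet> simplex_vec ja = \<alpha>" "v \<bullet> simplex_vec jg = \<gamma>"
proof -
  define x where "x j = v \<bullet> simplex_vec j" for j
  define \<alpha> \<gamma> where "\<alpha> = Max (range x)" and "\<gamma> = Min (range x)"
  have bounds: "\<gamma> \<le> x j \<and> x j \<le> \<alpha>" for j
    by (simp add: \<alpha>_def \<gamma>_def)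
  have "\<alpha> \<in> range x" "\<gamma> \<in> range x"
    by (simp_all add: \<alpha>_def \<gamma>_def)
  then obtain ja jg where ja: "x ja = \<alpha>" and jg: "x jg = \<gamma>"
    by blast
  have "\<gamma> < \<alpha>"
  proof (rule ccontr)
    assume "\<not> ?thesis"
    then have const: "x j = \<alpha>" for j
      using bounds[of j] by linarith
    have "(real CARD('n) + 1) * \<alpha> = (\<Sum>j\<in>UNIV. x j)"
      by (simp add: const)
    also have "\<dots> = 0"
      by (simp add: x_def sum_inner_simplex_vec)
    finally have "\<alpha> = 0"
      by (simp add: add_nonneg_eq_0_iff)
    then show False
      using ex_inner_simplex_vec_nonzero[OF assms] const by (simp add: x_def)
  qed
  with bounds ja jg show ?thesis
    unfolding x_def by (intro that) auto
qed

lemma tensor_eigenpair_odd_two_valued: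
  fixes v :: "real^'n::finite"
  assumes "odd d" "d \<ge> 3" and eig: "tensor_eigenpair simplex_tensor d v \<mu>"
  shows "\<exists>\<alpha> \<beta>. \<beta> < \<alpha> \<and> (\<forall>j. v \<bullet> simplex_vec j = \<alpha> \<or> v \<bullet> simplex_vec j = \<beta>)"
proof -
  have "v \<noteq> 0"
    using eig by (simp add: tensor_eigenpair_def)
  then obtain \<gamma> \<alpha> ja jg where lt: "\<gamma> < \<alpha>" and bounds: "\<forall>j. \<gamma> \<le> v \<bullet> simplex_vec j \<and> v \<bullet> simplex_vec j \<le> \<alpha>"
    and ja: "v \<bullet> simplex_vec ja = \<alpha>" and jg: "v \<bullet> simplex_vec jg = \<gamma>"
    by (rule ex_coord_min_max)
  define F where "F y = (real CARD('n) + 1) * y ^ (d - 1) - real CARD('n) * \<mu> * y" for y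
  have F_eq: "F (v \<bullet> simplex_vec j) = F (v \<bullet> simplex_vec k)" for j k
    using tensor_eigenpair_coord_eq[OF eig] by (simp add: F_def)
  have m: "even (d - 1)" "d - 1 \<ge> 2"
    using assms(1,2) by auto
  have "v \<bullet> simplex_vec j = \<alpha> \<or> v \<bullet> simplex_vec j = \<gamma>" for j
  proof (rule ccontr)
    assume "\<not> ?thesis"
    then have "\<gamma> < v \<bullet> simplex_vec j" "v \<bullet> simplex_vec j < \<alpha>"
      using bounds by (auto simp: order.order_iff_strict)
    moreover have "F \<gamma> = F (v \<bullet> simplex_vec j)" "F (v \<bullet> simplex_vec j) = F \<alpha>"
      using F_eq[of jg j] F_eq[of j ja] ja jg by simp_all
    ultimately show False
      using even_power_sub_linear_no_three_equal[OF m, of "real CARD('n) + 1" \<gamma> "v \<bullet> simplex_vec j" \<alpha>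
          "real CARD('n) * \<mu>"] by (simp add: F_def)
  qed
  with lt show ?thesis
    by blast
qed

lemma tensor_eigenpair_even_at_most_three_valued:
  fixes v :: "real^'n::finite"
  assumes "even d" "d \<ge> 4" and eig: "tensor_eigenpair simplex_tensor d v \<mu>"
  shows "(\<exists>\<alpha> \<beta>. \<beta> < \<alpha> \<and> (\<forall>j. v \<bullet> simplex_vec j = \<alpha> \<or> v \<bullet> simplex_vec j = \<beta>))
    \<or> (\<exists>\<alpha> \<beta> \<gamma> ja jb jg. \<gamma> < \<beta> \<and> \<beta> < \<alpha>
        \<and> (\<forall>j. v \<bullet> simplex_vec j = \<alpha> \<or> v \<bullet> simplex_vec j = \<beta> \<or> v \<bullet> simplex_vec j = \<gamma>)
        \<and> v \<bullet> simplex_vec ja = \<alpha> \<and> v \<bullet> simplex_vec jb = \<beta> \<and> v \<bullet> simplex_vec jg = \<gamma>)"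
proof -
  have "v \<noteq> 0"
    using eig by (simp add: tensor_eigenpair_def)
  then obtain \<gamma> \<alpha> ja jg where lt: "\<gamma> < \<alpha>" and bounds: "\<forall>j. \<gamma> \<le> v \<bullet> simplex_vec j \<and> v \<bullet> simplex_vec j \<le> \<alpha>"
    and ja: "v \<bullet> simplex_vec ja = \<alpha>" and jg: "v \<bullet> simplex_vec jg = \<gamma>"
    by (rule ex_coord_min_max)
  show ?thesis
  proof (cases "\<forall>j. v \<bullet> simplex_vec j = \<alpha> \<or> v \<bullet> simplex_vec j = \<gamma>")
    case True
    with lt show ?thesis
      by blast
  next
    case False
    then obtain jb where "v \<bullet> simplex_vec jb \<noteq> \<alpha>" "v \<bullet> simplex_vec jb \<noteq> \<gamma>"
      by blast
    with bounds have gb: "\<gamma> < v \<bullet> simplex_vec jb" and ba: "v \<bullet> simplex_vec jb < \<alpha>"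
      by (auto simp: order.order_iff_strict)
    define F where "F y = (real CARD('n) + 1) * y ^ (d - 1) - real CARD('n) * \<mu> * y" for y
    have F_eq: "F (v \<bullet> simplex_vec j) = F (v \<bullet> simplex_vec k)" for j k
      using tensor_eigenpair_coord_eq[OF eig] by (simp add: F_def)
    have m: "odd (d - 1)" "d - 1 \<ge> 3"
      using assms(1,2) by auto
    have no_four: False
      if "x < y" "y < z" "z < w" "F x = F y" "F y = F z" "F z = F w" for x y z w
      using odd_power_sub_linear_no_four_equal[OF m, of "real CARD('n) + 1" x y z w "real CARD('n) * \<mu>"]
        that by (simp add: F_def)
    have "v \<bullet> simplex_vec j = \<alpha> \<or> v \<bullet> simplex_vec j = v \<bullet> simplex_vec jb \<or> v \<bullet> simplex_vec j = \<gamma>" for j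
    proof (rule ccontr)
      assume "\<not> ?thesis"
      then have "\<gamma> < v \<bullet> simplex_vec j" "v \<bullet> simplex_vec j < \<alpha>"
        "v \<bullet> simplex_vec j \<noteq> v \<bullet> simplex_vec jb"
        using bounds by (auto simp: order.order_iff_strict)
      then show False
        using no_four[of \<gamma> "v \<bullet> simplex_vec j" "v \<bullet> simplex_vec jb" \<alpha>]
          no_four[of \<gamma> "v \<bullet> simplex_vec jb" "v \<bullet> simplex_vec j" \<alpha>]
          gb ba F_eq[of jg j] F_eq[of j jb] F_eq[of jb j] F_eq[of jb ja] F_eq[of j ja] F_eq[of jg jb] ja jg
        by (metis linorder_neqE_linordered_idom)
    qed
    then show ?thesis
      using gb ba ja jg by blast
  qed
qed

section \<open>Normalised subset sums\<close>

definition unit_frame_sum :: "'n::finite option set \<Rightarrow> real^'n" where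
  "unit_frame_sum K = inverse (norm (\<Sum>k\<in>K. simplex_vec k)) *\<^sub>R (\<Sum>k\<in>K. simplex_vec k)"

text \<open>The factor (-1)^d covers both parities of d: it gives the minus sign of the odd case
  and the plus sign of the even case.\<close>

definition subset_eigenvalue :: "nat \<Rightarrow> nat \<Rightarrow> nat \<Rightarrow> real" where
  "subset_eigenvalue n d k =
     ((real n + 1 - real k) ^ (d - 1) + (-1) ^ d * real k ^ (d - 1)) /
     (real n powr (real d / 2) * (real k * (real n + 1 - real k)) powr (real d / 2 - 1))"

lemma subset_eigenvalue_odd:
  "odd d \<Longrightarrow> subset_eigenvalue n d k =
     ((real n + 1 - real k) ^ (d - 1) - real k ^ (d - 1)) /
     (real n powr (real d / 2) * (real k * (real n + 1 - real k)) powr (real d / 2 - 1))"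
  by (simp add: subset_eigenvalue_def)

lemma subset_eigenvalue_even:
  "even d \<Longrightarrow> subset_eigenvalue n d k =
     ((real n + 1 - real k) ^ (d - 1) + real k ^ (d - 1)) /
     (real n powr (real d / 2) * (real k * (real n + 1 - real k)) powr (real d / 2 - 1))"
  by (simp add: subset_eigenvalue_def)

lemma subset_eigenvalue_eq_0_iff:
  assumes "odd d" "d \<ge> 2" "0 < k" "k \<le> n"
  shows "subset_eigenvalue n d k = 0 \<longleftrightarrow> 2 * k = n + 1"
proof -
  have "subset_eigenvalue n d k = 0 \<longleftrightarrow> (real n + 1 - real k) ^ (d - 1) = real k ^ (d - 1)"
    using assms by (simp add: subset_eigenvalue_odd)
  also have "\<dots> \<longleftrightarrow> real n + 1 - real k = real k"
    using assms by (simp add: power_eq_iff_eq_base)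
  also have "\<dots> \<longleftrightarrow> 2 * k = n + 1"
    by linarith
  finally show ?thesis .
qed

lemma frame_sum_eq_comb:
  "(\<Sum>k\<in>K. simplex_vec k :: real^'n::finite) = (\<Sum>k\<in>UNIV. (if k \<in> K then 1 else 0) *\<^sub>R simplex_vec k)"
  by (simp add: if_distrib[of "\<lambda>c. c *\<^sub>R _"] sum.inter_restrict[symmetric] cong: if_cong)

lemma inner_frame_sum:
  "(\<Sum>k\<in>K. simplex_vec k :: real^'n::finite) \<bullet> simplex_vec j
    = ((real CARD('n) + 1) * (if j \<in> K then 1 else 0) - real (card K)) / real CARD('n)"
  by (simp add: frame_sum_eq_comb inner_simplex_comb sum.If_cases)

lemma norm_frame_sum:
  "norm (\<Sum>k\<in>K. simplex_vec k :: real^'n::finite)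
    = sqrt (real (card K) * (real CARD('n) + 1 - real (card K)) / real CARD('n))"
proof -
  have sq: "(\<lambda>k. (if k \<in> K then 1 else 0 :: real)\<^sup>2) = (\<lambda>k. if k \<in> K then 1 else 0)"
    by auto
  have "(norm (\<Sum>k\<in>K. simplex_vec k :: real^'n))\<^sup>2
      = ((real CARD('n) + 1) * real (card K) - (real (card K))\<^sup>2) / real CARD('n)"
    unfolding frame_sum_eq_comb norm_simplex_comb_squared sq by (simp add: sum.If_cases)
  also have "\<dots> = real (card K) * (real CARD('n) + 1 - real (card K)) / real CARD('n)"
    by (simp add: algebra_simps power2_eq_square)
  finally show ?thesis
    by (simp add: real_sqrt_unique)
qed

lemma times_sqrt_divide: "N > 0 \<Longrightarrow> N * sqrt (X / N) = sqrt (N * X)"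
proof -
  assume "N > 0"
  then have "N * sqrt (X / N) = sqrt (N\<^sup>2) * sqrt (X / N)"
    by simp
  also have "\<dots> = sqrt (N * X)"
    using \<open>N > 0\<close> by (simp only: real_sqrt_mult[symmetric]) (simp add: power2_eq_square)
  finally show ?thesis .
qed

lemma sqrt_power_eq_powr: "X > 0 \<Longrightarrow> sqrt X ^ d = X powr (real d / 2)"
  by (simp add: powr_half_sqrt[symmetric] powr_power)

lemma subset_eigenvalue_eq_sum:
  fixes N k :: real
  assumes "N > 0" "0 < k" "k < N + 1" "d \<ge> 2"
  defines "r \<equiv> N * sqrt (k * (N + 1 - k) / N)"
  shows "k * ((N + 1 - k) / r) ^ d + (N + 1 - k) * (- k / r) ^ d
       = ((N + 1 - k) ^ (d - 1) + (-1) ^ d * k ^ (d - 1)) /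
         (N powr (real d / 2) * (k * (N + 1 - k)) powr (real d / 2 - 1))"
proof -
  define a where "a = N + 1 - k"
  have a0: "a > 0"
    using assms by (simp add: a_def)
  define D where "D = N powr (real d / 2) * (k * a) powr (real d / 2 - 1)"
  have "r = sqrt (N * (k * a))"
    using assms(1) by (simp add: r_def a_def times_sqrt_divide)
  then have "r ^ d = N powr (real d / 2) * (k * a) powr (real d / 2)"
    using assms(1,2) a0 by (simp add: sqrt_power_eq_powr powr_mult)
  also have "(k * a) powr (real d / 2) = (k * a) * (k * a) powr (real d / 2 - 1)"
    using assms(2) a0 by (simp add: powr_mult_base)
  finally have r: "r ^ d = D * (k * a)"
    by (simp add: D_def ac_simps)
  have pow: "a ^ d = a * a ^ (d - 1)" "k ^ d = k * k ^ (d - 1)"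
    using assms(4) by (simp_all add: power_eq_if)
  have "k * (a / r) ^ d + a * (- k / r) ^ d = (k * a ^ d + a * ((-1) ^ d * k ^ d)) / r ^ d"
    by (simp add: power_divide add_divide_distrib power_minus[of "k / r"])
  also have "\<dots> = (k * a) * (a ^ (d - 1) + (-1) ^ d * k ^ (d - 1)) / r ^ d"
    unfolding pow by (simp add: algebra_simps)
  also have "\<dots> = (a ^ (d - 1) + (-1) ^ d * k ^ (d - 1)) / D"
    using assms(2) a0 unfolding r by simp
  finally show ?thesis
    by (simp add: a_def D_def)
qed

lemma two_valued_tensor_eigenpair:
  fixes v :: "real^'n::finite"
  assumes "v \<noteq> 0" "\<alpha> \<noteq> \<beta>" "\<And>j. v \<bullet> simplex_vec j = \<alpha> \<or> v \<bullet> simplex_vec j = \<beta>"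
  shows "\<exists>\<mu>. tensor_eigenpair simplex_tensor d v \<mu>"
proof
  define N where "N = real CARD('n)"
  define \<mu> where "\<mu> = (N + 1) * (\<alpha> ^ (d - 1) - \<beta> ^ (d - 1)) / (N * (\<alpha> - \<beta>))"
  have "N * \<mu> * (\<alpha> - \<beta>) = (N + 1) * (\<alpha> ^ (d - 1) - \<beta> ^ (d - 1))"
    using assms(2) by (simp add: \<mu>_def N_def)
  then have "(N + 1) * \<beta> ^ (d - 1) - N * \<mu> * \<beta> = (N + 1) * \<alpha> ^ (d - 1) - N * \<mu> * \<alpha>"
    by (simp add: algebra_simps)
  with assms(3) show "tensor_eigenpair simplex_tensor d v \<mu>"
    by (intro tensor_eigenpairI[OF assms(1), of _ _ "(N + 1) * \<alpha> ^ (d - 1) - N * \<mu> * \<alpha>"])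
      (metis N_def)
qed

lemma norm_unit_frame_sum:
  fixes K :: "'n::finite option set"
  assumes "K \<noteq> {}" "card K \<le> CARD('n)"
  shows "norm (unit_frame_sum K) = 1"
proof -
  have "card K > 0"
    using assms(1) by (simp add: card_gt_0_iff)
  then have "norm (\<Sum>k\<in>K. simplex_vec k :: real^'n) > 0"
    using assms(2) by (simp add: norm_frame_sum)
  then show ?thesis
    by (simp add: unit_frame_sum_def)
qed

lemma unit_frame_sum_tensor_eigenpair:
  fixes K :: "'n::finite option set"
  assumes "K \<noteq> {}" "card K \<le> CARD('n)" "d \<ge> 2"
  shows "tensor_eigenpair simplex_tensor d (unit_frame_sum K) (subset_eigenvalue CARD('n) d (card K))"
proof -
  define N k where "N = real CARD('n)" and "k = real (card K)"
  define r where "r = N * sqrt (k * (N + 1 - k) / N)"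
  have N0: "N > 0" and k0: "k > 0" and kN: "k < N + 1"
    using assms(1,2) by (simp_all add: N_def k_def card_gt_0_iff)
  have r0: "r > 0"
    using N0 k0 kN by (simp add: r_def)
  define v where "v = unit_frame_sum K"
  have nv: "norm v = 1"
    using norm_unit_frame_sum[OF assms(1,2)] by (simp add: v_def)
  have coord: "v \<bullet> simplex_vec j = (if j \<in> K then (N + 1 - k) / r else - k / r)" for j
    using N0 r0 unfolding v_def unit_frame_sum_def
    by (simp add: inner_frame_sum norm_frame_sum N_def[symmetric] k_def[symmetric] r_def field_simps)
  have "- k / r < (N + 1 - k) / r"
    using divide_strict_right_mono[OF _ r0, of "- k" "N + 1 - k"] N0 by simp
  then obtain \<mu> where eig: "tensor_eigenpair simplex_tensor d v \<mu>"
    using two_valued_tensor_eigenpair[of v "(N + 1 - k) / r" "- k / r"] nv coord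
    by (metis less_irrefl norm_zero zero_neq_one)
  have "\<mu> = (\<Sum>j\<in>UNIV. (v \<bullet> simplex_vec j) ^ d)"
    using tensor_eigenpair_eigenvalue[OF eig nv] assms(3) by simp
  also have "\<dots> = k * ((N + 1 - k) / r) ^ d + (N + 1 - k) * (- k / r) ^ d"
    by (simp add: coord if_distrib[of "\<lambda>x. x ^ d"] sum_UNIV_if_mem N_def k_def cong: if_cong)
  also have "\<dots> = subset_eigenvalue CARD('n) d (card K)"
    unfolding r_def subset_eigenvalue_eq_sum[OF N0 k0 kN assms(3)]
    by (simp add: subset_eigenvalue_def N_def k_def)
  finally show ?thesis
    using eig by (simp add: v_def)
qed

lemma two_valued_coords_imp_unit_frame_sum:
  fixes v :: "real^'n::finite"
  assumes "norm v = 1" "\<beta> < \<alpha>" "\<And>j. v \<bullet> simplex_vec j = \<alpha> \<or> v \<bullet> simplex_vec j = \<beta>"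
  defines "K \<equiv> {j. v \<bullet> simplex_vec j = \<alpha>}"
  shows "K \<noteq> {}" "card K \<le> CARD('n)" "v = unit_frame_sum K"
proof -
  define N k where "N = real CARD('n)" and "k = real (card K)"
  have N0: "N > 0"
    by (simp add: N_def)
  have coord: "v \<bullet> simplex_vec j = (if j \<in> K then \<alpha> else \<beta>)" for j
    using assms(2) assms(3)[of j] by (auto simp: K_def)
  have "0 = (\<Sum>j\<in>UNIV. v \<bullet> simplex_vec j)"
    by (simp add: sum_inner_simplex_vec)
  also have "\<dots> = k * \<alpha> + (N + 1 - k) * \<beta>"
    by (simp add: coord sum_UNIV_if_mem N_def k_def)
  finally have balance: "k * \<alpha> + (N + 1 - k) * \<beta> = 0" ..
  have "v \<noteq> 0"
    using assms(1) by auto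
  then obtain j0 where j0: "v \<bullet> simplex_vec j0 \<noteq> 0"
    using ex_inner_simplex_vec_nonzero by blast
  show K_ne: "K \<noteq> {}"
  proof
    assume "K = {}"
    then show False
      using balance coord[of j0] j0 N0 by (simp add: k_def)
  qed
  have "K \<noteq> UNIV"
  proof
    assume "K = UNIV"
    then have "\<alpha> = 0"
      using balance N0 by (simp add: k_def N_def add_nonneg_eq_0_iff)
    then show False
      using coord[of j0] j0 \<open>K = UNIV\<close> by simp
  qed
  then have "card K < card (UNIV :: 'n option set)"
    by (intro psubset_card_mono) auto
  then show card_K: "card K \<le> CARD('n)"
    by simp
  have k0: "k > 0" and kN: "N + 1 - k > 0"
    using K_ne card_K by (simp_all add: k_def N_def card_gt_0_iff)
  have \<alpha>0: "\<alpha> > 0"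
  proof (rule ccontr)
    assume "\<not> \<alpha> > 0"
    then have "k * \<alpha> \<le> 0" "(N + 1 - k) * \<beta> < 0"
      using k0 kN assms(2) by (auto simp: mult_nonneg_nonpos mult_pos_neg)
    then show False
      using balance by simp
  qed
  define t where "t = N * \<alpha> / (N + 1 - k)"
  have v_eq: "v = t *\<^sub>R (\<Sum>k\<in>K. simplex_vec k)"
  proof (rule simplex_vec_inner_eqI)
    fix j
    have "(t *\<^sub>R (\<Sum>k\<in>K. simplex_vec k)) \<bullet> simplex_vec j
        = t * ((N + 1) * (if j \<in> K then 1 else 0) - k) / N"
      by (simp add: inner_frame_sum N_def k_def)
    also have "\<dots> = (if j \<in> K then \<alpha> else - k * \<alpha> / (N + 1 - k))"
      using N0 kN by (simp add: t_def)
    also have "- k * \<alpha> / (N + 1 - k) = \<beta>"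
      using balance kN by (simp add: field_simps)
    finally show "v \<bullet> simplex_vec j = (t *\<^sub>R (\<Sum>k\<in>K. simplex_vec k)) \<bullet> simplex_vec j"
      by (simp add: coord)
  qed
  have "t > 0"
    using \<alpha>0 N0 kN by (simp add: t_def)
  with v_eq assms(1) have "t * norm (\<Sum>k\<in>K. simplex_vec k :: real^'n) = 1"
    by simp
  then have "inverse (norm (\<Sum>k\<in>K. simplex_vec k :: real^'n)) = t"
    by (metis inverse_unique mult.commute)
  with v_eq show "v = unit_frame_sum K"
    by (simp add: unit_frame_sum_def)
qed

lemma tensor_eigenpair_order_two:
  fixes v :: "real^'n::finite"
  assumes "v \<noteq> 0"
  shows "tensor_eigenpair simplex_tensor 2 v (1 + 1 / real CARD('n))"
proof -
  let ?S = "\<Sum>k\<in>UNIV. (v \<bullet> simplex_vec k) *\<^sub>R simplex_vec k"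
  have "(1 + 1 / real CARD('n)) *\<^sub>R v = ((1 + 1 / real CARD('n)) * (real CARD('n) / (real CARD('n) + 1))) *\<^sub>R ?S"
    by (subst simplex_frame_expansion[of v]) (rule scaleR_scaleR)
  also have "(1 + 1 / real CARD('n)) * (real CARD('n) / (real CARD('n) + 1)) = 1"
    by (simp add: divide_simps)
  finally have "(1 + 1 / real CARD('n)) *\<^sub>R v = ?S"
    by simp
  with assms show ?thesis
    by (simp add: tensor_eigenpair_def tensor_apply_simplex_tensor)
qed

lemma two_valued_tensor_eigenpair_imp_subset:
  fixes v :: "real^'n::finite"
  assumes "tensor_eigenpair simplex_tensor d v \<mu>" "norm v = 1" "d \<ge> 2"
    and "\<beta> < \<alpha>" "\<And>j. v \<bullet> simplex_vec j = \<alpha> \<or> v \<bullet> simplex_vec j = \<beta>"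
  shows "\<exists>K. K \<noteq> {} \<and> card K \<le> CARD('n) \<and> v = unit_frame_sum K
    \<and> \<mu> = subset_eigenvalue CARD('n) d (card K)"
proof -
  define K where "K = {j. v \<bullet> simplex_vec j = \<alpha>}"
  note K = two_valued_coords_imp_unit_frame_sum[OF assms(2,4,5), folded K_def]
  have "\<mu> = subset_eigenvalue CARD('n) d (card K)"
    using tensor_eigenpair_unique_eigenvalue[OF assms(1)] unit_frame_sum_tensor_eigenpair[OF K(1,2) assms(3)]
    by (simp add: K(3)[symmetric])
  with K show ?thesis
    by blast
qed

lemma tensor_eigenpair_odd_iff:
  fixes v :: "real^'n::finite"
  assumes "odd d" "d \<ge> 3" "norm v = 1"
  shows "tensor_eigenpair simplex_tensor d v \<mu> \<longleftrightarrow>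
    (\<exists>K. K \<noteq> {} \<and> card K \<le> CARD('n) \<and> v = unit_frame_sum K
      \<and> \<mu> = subset_eigenvalue CARD('n) d (card K))"
proof
  assume eig: "tensor_eigenpair simplex_tensor d v \<mu>"
  then obtain \<alpha> \<beta> where "\<beta> < \<alpha>" "\<forall>j. v \<bullet> simplex_vec j = \<alpha> \<or> v \<bullet> simplex_vec j = \<beta>"
    using tensor_eigenpair_odd_two_valued[OF assms(1,2)] by blast
  then show "\<exists>K. K \<noteq> {} \<and> card K \<le> CARD('n) \<and> v = unit_frame_sum K
      \<and> \<mu> = subset_eigenvalue CARD('n) d (card K)"
    using two_valued_tensor_eigenpair_imp_subset[OF eig assms(3)] assms(2) by simp
next
  assume "\<exists>K. K \<noteq> {} \<and> card K \<le> CARD('n) \<and> v = unit_frame_sum K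
    \<and> \<mu> = subset_eigenvalue CARD('n) d (card K)"
  then obtain K :: "'n option set" where "K \<noteq> {}" "card K \<le> CARD('n)" "v = unit_frame_sum K"
    "\<mu> = subset_eigenvalue CARD('n) d (card K)"
    by blast
  then show "tensor_eigenpair simplex_tensor d v \<mu>"
    using unit_frame_sum_tensor_eigenpair[of K d] assms(2) by simp
qed

lemma tensor_eigenpair_odd_eigenvalue_nonzero:
  fixes v :: "real^'n::finite"
  assumes "odd d" "d \<ge> 3" "even CARD('n)" "norm v = 1" "tensor_eigenpair simplex_tensor d v \<mu>"
  shows "\<mu> \<noteq> 0"
proof -
  obtain K :: "'n option set" where "K \<noteq> {}" "card K \<le> CARD('n)" "\<mu> = subset_eigenvalue CARD('n) d (card K)"
    using tensor_eigenpair_odd_iff[OF assms(1,2,4)] assms(5) by blast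
  moreover have "2 * card K \<noteq> CARD('n) + 1"
    using assms(3) by presburger
  ultimately show ?thesis
    using subset_eigenvalue_eq_0_iff[of d "card K"] assms(1,2) by (simp add: card_gt_0_iff)
qed

section \<open>The turning point s*\<close>

text \<open>With m = d - 1 and u = (n + 1) t - 1, the derivative of g(t)/t is
  ratio_deriv_numerator m u / t^2 for even d.\<close>

definition ratio_deriv_numerator :: "nat \<Rightarrow> real \<Rightarrow> real" where
  "ratio_deriv_numerator m u = (real m - 1) * u ^ m + real m * u ^ (m - 1) - 1"

lemma ratio_deriv_numerator_strict_mono:
  assumes "m \<ge> 3" "0 \<le> u" "u < w"
  shows "ratio_deriv_numerator m u < ratio_deriv_numerator m w"
proof -
  have "(real m - 1) * u ^ m \<le> (real m - 1) * w ^ m"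
    using assms by (intro mult_left_mono power_mono) auto
  moreover have "real m * u ^ (m - 1) < real m * w ^ (m - 1)"
    using assms by (simp add: power_strict_mono)
  ultimately show ?thesis
    by (simp add: ratio_deriv_numerator_def)
qed

lemma ratio_deriv_numerator_neg:
  assumes "odd m" "m \<ge> 3" "-1 < u" "u \<le> 0"
  shows "ratio_deriv_numerator m u < 0"
proof -
  have deriv: "DERIV (ratio_deriv_numerator m) z :> real m * (real m - 1) * z ^ (m - 2) * (z + 1)" for z
  proof -
    have "DERIV (ratio_deriv_numerator m) z :>
        (real m - 1) * (real m * z ^ (m - 1)) + real m * (real (m - 1) * z ^ (m - 1 - 1))"
      unfolding ratio_deriv_numerator_def by (auto intro!: derivative_eq_intros)
    moreover have "m - 1 = Suc (m - 2)"
      using assms(2) by simp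
    then have "z ^ (m - 1) = z ^ (m - 2) * z"
      by (simp only: power_Suc2)
    moreover have "real (m - 1) = real m - 1" "m - 1 - 1 = m - 2"
      using assms(2) by simp_all
    ultimately show ?thesis
      by (simp add: algebra_simps)
  qed
  have "ratio_deriv_numerator m u < ratio_deriv_numerator m (-1)"
  proof (rule DERIV_neg_imp_decreasing_open[OF assms(3)])
    fix z
    assume z: "-1 < z" "z < u"
    have "odd (m - 2)"
      using assms(1,2) by simp
    then have "z ^ (m - 2) < 0"
      using z assms(4) zero_le_odd_power[of "m - 2" z] by linarith
    moreover have "real m * (real m - 1) > 0" "z + 1 > 0"
      using assms(2) z by auto
    ultimately have "real m * (real m - 1) * z ^ (m - 2) * (z + 1) < 0"
      by (simp add: mult_pos_neg mult_neg_pos)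
    then show "\<exists>y. DERIV (ratio_deriv_numerator m) z :> y \<and> y < 0"
      using deriv by blast
  next
    show "continuous_on {-1..u} (ratio_deriv_numerator m)"
      unfolding ratio_deriv_numerator_def by (intro continuous_intros)
  qed
  also have "ratio_deriv_numerator m (-1) = 0"
    using assms(1,2) by (simp add: ratio_deriv_numerator_def)
  finally show ?thesis .
qed

lemma power_ge_linear:
  fixes x :: real
  assumes "x \<ge> 2" "m \<ge> 3"
  shows "x ^ m \<ge> real m * (x + 1) - 1"
  using assms(2)
proof (induction m rule: nat_induct_at_least)
  case base
  have "x ^ 3 - (3 * (x + 1) - 1) = (x - 2) * (x + 1)\<^sup>2"
    by (simp add: algebra_simps power2_eq_square power3_eq_cube)
  moreover have "(x - 2) * (x + 1)\<^sup>2 \<ge> 0"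
    using assms(1) by simp
  ultimately show ?case
    by simp
next
  case (Suc m)
  have "x * (real m * (x + 1) - 1) \<le> x ^ Suc m"
    using Suc assms(1) by simp
  moreover have "3 * (x + 1) - 1 \<le> (x - 1) * (real m * (x + 1) - 1)"
  proof -
    have "3 * (x + 1) - 1 \<le> real m * (x + 1) - 1"
      using Suc assms(1) by (intro diff_right_mono mult_right_mono) auto
    also have "\<dots> \<le> (x - 1) * (real m * (x + 1) - 1)"
    proof -
      have "3 * 3 \<le> real m * (x + 1)"
        using Suc assms(1) by (intro mult_mono) auto
      then have "1 * (real m * (x + 1) - 1) \<le> (x - 1) * (real m * (x + 1) - 1)"
        using assms(1) by (intro mult_right_mono) auto
      then show ?thesis
        by simp
    qed
    finally show ?thesis .
  qed
  ultimately show ?case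
    using assms(1) by (simp add: algebra_simps)
qed

lemma ratio_deriv_numerator_at_inverse:
  fixes x :: real
  assumes "x \<ge> 2" "m \<ge> 3"
  shows "ratio_deriv_numerator m (1 / x) \<le> 0"
proof -
  have x0: "x > 0"
    using assms(1) by simp
  have "x ^ m = x * x ^ (m - 1)"
    using assms(2) by (simp add: power_eq_if)
  then have "ratio_deriv_numerator m (1 / x) = ((real m - 1) + real m * x - x ^ m) / x ^ m"
    using x0 by (simp add: ratio_deriv_numerator_def field_simps)
  moreover have "(real m - 1) + real m * x - x ^ m \<le> 0"
    using power_ge_linear[OF assms] by (simp add: algebra_simps)
  ultimately show ?thesis
    using x0 by (simp add: divide_nonpos_pos)
qed

lemma has_field_derivative_g_ratio:
  fixes M z :: real
  assumes "m \<ge> 1" "z \<noteq> 0"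
  shows "((\<lambda>t. ((M * t - 1) ^ m + 1) / t) has_field_derivative
      ratio_deriv_numerator m (M * z - 1) / z\<^sup>2) (at z)"
proof -
  have "((\<lambda>t. ((M * t - 1) ^ m + 1) / t) has_field_derivative
      ((real m * (M * z - 1) ^ (m - 1) * M) * z - ((M * z - 1) ^ m + 1)) / (z * z)) (at z)"
    using assms(2) by (auto intro!: derivative_eq_intros simp: algebra_simps)
  moreover have pow: "(M * z - 1) ^ m = (M * z - 1) ^ (m - 1) * (M * z - 1)"
    using assms(1) by (simp add: power_eq_if)
  have "(real m * (M * z - 1) ^ (m - 1) * M) * z - ((M * z - 1) ^ m + 1)
      = ratio_deriv_numerator m (M * z - 1)"
    unfolding ratio_deriv_numerator_def pow by (simp add: algebra_simps)
  ultimately show ?thesis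
    by (simp add: power2_eq_square)
qed

lemma ex_g_ratio_turning_point:
  assumes "n \<ge> 2" "even d" "d \<ge> 4"
  shows "\<exists>s. 1 / real n \<le> s \<and> s < 2 / (real n + 1) \<and>
      strict_antimono_on {0<..s} (\<lambda>t. g_fun n d t / t) \<and> strict_mono_on {s..} (\<lambda>t. g_fun n d t / t)"
proof -
  define m M where "m = d - 1" and "M = real n + 1"
  have m: "m \<ge> 3" "odd m" and M0: "M > 0"
    using assms by (auto simp: m_def M_def)
  define p where "p t = ((M * t - 1) ^ m + 1) / t" for t
  have p_eq: "(\<lambda>t. g_fun n d t / t) = p"
    using assms(2,3) by (simp add: fun_eq_iff p_def g_fun_def M_def m_def)
  have n2: "real n \<ge> 2"
    using assms(1) by simp
  have "continuous_on {1 / real n..1} (ratio_deriv_numerator m)"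
    unfolding ratio_deriv_numerator_def by (intro continuous_intros)
  moreover have "0 \<le> ratio_deriv_numerator m 1" "1 / real n \<le> 1"
    using m(1) n2 by (simp_all add: ratio_deriv_numerator_def)
  ultimately obtain u0 where u0: "1 / real n \<le> u0" "u0 \<le> 1" "ratio_deriv_numerator m u0 = 0"
    using IVT'[of "ratio_deriv_numerator m" "1 / real n" 0 1] ratio_deriv_numerator_at_inverse[OF n2 m(1)]
    by auto
  have "1 / real n > 0"
    using n2 by simp
  with u0(1) have u0_pos: "u0 > 0"
    by linarith
  have neg: "ratio_deriv_numerator m u < 0" if "-1 < u" "u < u0" for u
    using ratio_deriv_numerator_neg[OF m(2,1) that(1)] ratio_deriv_numerator_strict_mono[OF m(1) _ that(2)] u0(3)
    by (cases "u \<le> 0") auto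
  have pos: "ratio_deriv_numerator m u > 0" if "u0 < u" for u
    using ratio_deriv_numerator_strict_mono[OF m(1) _ that] u0(3) u0_pos by simp
  have "ratio_deriv_numerator m 1 > 0"
    using m(1) by (simp add: ratio_deriv_numerator_def)
  then have u0_less: "u0 < 1"
    using u0(2,3) by (cases "u0 = 1") auto
  define s where "s = (u0 + 1) / M"
  have s_pos: "s > 0" and Ms: "M * s - 1 = u0"
    using u0_pos M0 by (simp_all add: s_def)
  have deriv: "(p has_real_derivative ratio_deriv_numerator m (M * z - 1) / z\<^sup>2) (at z)" if "z \<noteq> 0" for z
    using has_field_derivative_g_ratio[of m z M] that m(1) by (simp add: p_def[abs_def])
  have cont: "continuous_on {x..y} p" if "0 < x" for x y
    using that unfolding p_def by (intro continuous_intros) auto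
  have "strict_antimono_on {0<..s} p"
  proof (rule monotone_onI)
    fix x y assume xy: "x \<in> {0<..s}" "y \<in> {0<..s}" "x < y"
    show "p y < p x"
    proof (rule DERIV_neg_imp_decreasing_open[OF xy(3) _ cont])
      fix z assume z: "x < z" "z < y"
      then have "0 < M * z" "M * z < M * s"
        using xy M0 by auto
      then have "-1 < M * z - 1" "M * z - 1 < u0"
        using Ms by linarith+
      then show "\<exists>D. (p has_real_derivative D) (at z) \<and> D < 0"
        using deriv[of z] neg z xy by (auto intro!: divide_neg_pos)
    qed (use xy in auto)
  qed
  moreover have "strict_mono_on {s..} p"
  proof (rule monotone_onI)
    fix x y assume xy: "x \<in> {s..}" "y \<in> {s..}" "x < y"
    show "p x < p y"
    proof (rule DERIV_pos_imp_increasing_open[OF xy(3) _ cont])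
      fix z assume z: "x < z" "z < y"
      then have "M * s < M * z"
        using xy M0 by auto
      then have "u0 < M * z - 1"
        using Ms by linarith
      then show "\<exists>D. (p has_real_derivative D) (at z) \<and> D > 0"
        using deriv[of z] pos z xy s_pos by auto
    qed (use xy s_pos in auto)
  qed
  moreover have "1 / real n \<le> s"
  proof -
    have "1 / real n = (1 / real n + 1) / M"
      using n2 by (simp add: M_def divide_simps)
    also have "\<dots> \<le> s"
      unfolding s_def using u0(1) M0 by (simp add: divide_right_mono)
    finally show ?thesis .
  qed
  moreover have "s < 2 / (real n + 1)"
    unfolding s_def M_def[symmetric] using u0_less M0 by (simp add: divide_strict_right_mono)
  ultimately show ?thesis
    unfolding p_eq by blast
qed

lemma s_star_characterization:
  assumes "n \<ge> 2" "even d" "d \<ge> 4"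
  shows "1 / real n \<le> s_star n d" "s_star n d < 2 / (real n + 1)"
    "strict_antimono_on {0<..s_star n d} (\<lambda>t. g_fun n d t / t)"
    "strict_mono_on {s_star n d..} (\<lambda>t. g_fun n d t / t)"
proof -
  let ?p = "\<lambda>t. g_fun n d t / t"
  let ?P = "\<lambda>s. 1 / real n \<le> s \<and> s < 2 / (real n + 1) \<and>
      strict_antimono_on {0<..s} ?p \<and> strict_mono_on {s..} ?p"
  have not_less: False if "?P a" "?P b" "a < b" for a b
  proof -
    have "0 < 1 / real n"
      using assms(1) by simp
    with that(1) have "0 < a"
      by linarith
    then have "?p b < ?p a" "?p a < ?p b"
      using that by (auto simp: monotone_on_def)
    then show False
      by simp
  qed
  obtain s where "?P s"
    using ex_g_ratio_turning_point[OF assms] by blast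
  then have "\<exists>!s. ?P s"
    using not_less by (blast intro: linorder_neqE)
  from theI'[OF this] show "1 / real n \<le> s_star n d" "s_star n d < 2 / (real n + 1)"
    "strict_antimono_on {0<..s_star n d} ?p" "strict_mono_on {s_star n d..} ?p"
    unfolding s_star_def by blast+
qed

lemma g_ratio_eq_imp_s_star_between:
  assumes "n \<ge> 2" "even d" "d \<ge> 4" "0 < a" "a < b" "g_fun n d a / a = g_fun n d b / b"
  shows "a \<le> s_star n d" "s_star n d < b"
proof -
  show "a \<le> s_star n d"
  proof (rule ccontr)
    assume "\<not> ?thesis"
    then have "g_fun n d a / a < g_fun n d b / b"
      using s_star_characterization(4)[OF assms(1-3)] assms(5) by (auto simp: monotone_on_def)
    then show False
      using assms(6) by simp
  qed
  show "s_star n d < b"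
  proof (rule ccontr)
    assume "\<not> ?thesis"
    then have "g_fun n d b / b < g_fun n d a / a"
      using s_star_characterization(3)[OF assms(1-3)] assms(4,5) by (auto simp: monotone_on_def)
    then show False
      using assms(6) by simp
  qed
qed

section \<open>Two-level eigenvectors\<close>

definition two_level_weight :: "'a set \<Rightarrow> 'a set \<Rightarrow> real \<Rightarrow> real \<Rightarrow> 'a \<Rightarrow> real" where
  "two_level_weight K1 K2 a b k = (if k \<in> K1 then a else if k \<in> K2 then b else 0)"

definition two_level_vec :: "'n::finite option set \<Rightarrow> 'n option set \<Rightarrow> real \<Rightarrow> real \<Rightarrow> real^'n" where
  "two_level_vec K1 K2 a b =
     inverse (sqrt (((real CARD('n) + 1) * a\<^sup>2 * real (card K1)
                     + (real CARD('n) + 1) * b\<^sup>2 * real (card K2) - 1) / real CARD('n)))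
     *\<^sub>R (a *\<^sub>R (\<Sum>k\<in>K1. simplex_vec k) + b *\<^sub>R (\<Sum>k\<in>K2. simplex_vec k))"

definition two_level_eigenvalue :: "nat \<Rightarrow> nat \<Rightarrow> nat \<Rightarrow> nat \<Rightarrow> real \<Rightarrow> real \<Rightarrow> real" where
  "two_level_eigenvalue n d k1 k2 a b =
     (real k1 * ((real n + 1) * a - 1) ^ d + real k2 * ((real n + 1) * b - 1) ^ d
       + real n + 1 - real k1 - real k2) /
     (real n powr (real d / 2) *
      ((real n + 1) * a\<^sup>2 * real k1 + (real n + 1) * b\<^sup>2 * real k2 - 1) powr (real d / 2))"

definition two_level_params :: "nat \<Rightarrow> 'n::finite option set \<Rightarrow> 'n option set \<Rightarrow> real \<Rightarrow> real \<Rightarrow> bool" where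
  "two_level_params d K1 K2 a b \<longleftrightarrow>
     K1 \<noteq> {} \<and> K2 \<noteq> {} \<and> K1 \<inter> K2 = {} \<and> card K1 \<le> CARD('n) \<and> card K2 \<le> CARD('n) \<and>
     0 < a \<and> a \<le> s_star CARD('n) d \<and> s_star CARD('n) d < b \<and> b \<le> 1 \<and>
     real (card K1) * a + real (card K2) * b = 1 \<and>
     g_fun CARD('n) d a / a = g_fun CARD('n) d b / b"

lemma two_level_comb:
  fixes K1 K2 :: "'n::finite option set"
  assumes "K1 \<inter> K2 = {}"
  shows "a *\<^sub>R (\<Sum>k\<in>K1. simplex_vec k) + b *\<^sub>R (\<Sum>k\<in>K2. simplex_vec k)
    = (\<Sum>k\<in>UNIV. two_level_weight K1 K2 a b k *\<^sub>R (simplex_vec k :: real^'n))"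
proof -
  have "two_level_weight K1 K2 a b k *\<^sub>R (simplex_vec k :: real^'n)
     = (if k \<in> K1 then a *\<^sub>R simplex_vec k else 0) + (if k \<in> K2 then b *\<^sub>R simplex_vec k else 0)" for k
    using assms by (auto simp: two_level_weight_def)
  then show ?thesis
    by (simp add: sum.distrib sum.inter_restrict[symmetric] scaleR_sum_right)
qed

lemma sum_two_level_weight:
  fixes K1 K2 :: "'n::finite option set"
  assumes "K1 \<inter> K2 = {}"
  shows "(\<Sum>k\<in>UNIV. two_level_weight K1 K2 a b k) = real (card K1) * a + real (card K2) * b"
    "(\<Sum>k\<in>UNIV. (two_level_weight K1 K2 a b k)\<^sup>2) = real (card K1) * a\<^sup>2 + real (card K2) * b\<^sup>2"
proof -
  show "(\<Sum>k\<in>UNIV. two_level_weight K1 K2 a b k) = real (card K1) * a + real (card K2) * b"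
    using sum_UNIV_if_mem_disjoint[OF assms, of a b 0] by (simp add: two_level_weight_def)
  have sq: "(\<lambda>k. (two_level_weight K1 K2 a b k)\<^sup>2) = (\<lambda>k. if k \<in> K1 then a\<^sup>2 else if k \<in> K2 then b\<^sup>2 else 0)"
    by (auto simp: two_level_weight_def)
  show "(\<Sum>k\<in>UNIV. (two_level_weight K1 K2 a b k)\<^sup>2) = real (card K1) * a\<^sup>2 + real (card K2) * b\<^sup>2"
    unfolding sq using sum_UNIV_if_mem_disjoint[OF assms, of "a\<^sup>2" "b\<^sup>2" 0] by simp
qed

lemma inner_two_level_vec:
  fixes K1 K2 :: "'n::finite option set" and a b :: real
  defines "N \<equiv> real CARD('n)"
  defines "Q \<equiv> (N + 1) * a\<^sup>2 * real (card K1) + (N + 1) * b\<^sup>2 * real (card K2) - 1"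
  assumes "K1 \<inter> K2 = {}" "real (card K1) * a + real (card K2) * b = 1"
    and "norm (two_level_vec K1 K2 a b) = 1"
  shows "Q > 0"
    "two_level_vec K1 K2 a b \<bullet> simplex_vec j = ((N + 1) * two_level_weight K1 K2 a b j - 1) / (N * sqrt (Q / N))"
proof -
  define w where "w = (\<Sum>k\<in>UNIV. two_level_weight K1 K2 a b k *\<^sub>R (simplex_vec k :: real^'n))"
  have v: "two_level_vec K1 K2 a b = inverse (sqrt (Q / N)) *\<^sub>R w"
    by (simp add: two_level_vec_def two_level_comb[OF assms(3)] w_def Q_def N_def)
  have norm_w: "(norm w)\<^sup>2 = Q / N"
    unfolding w_def norm_simplex_comb_squared sum_two_level_weight[OF assms(3)] assms(4)
    by (simp add: Q_def N_def algebra_simps)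
  moreover have "sqrt (Q / N) \<noteq> 0"
    using assms(5) v by auto
  ultimately have "Q / N > 0"
    by (metis less_eq_real_def real_sqrt_zero zero_le_power2)
  then show "Q > 0"
    by (simp add: N_def zero_less_divide_iff)
  have "w \<bullet> simplex_vec j = ((N + 1) * two_level_weight K1 K2 a b j - 1) / N"
    unfolding w_def inner_simplex_comb sum_two_level_weight[OF assms(3)] assms(4) N_def ..
  then show "two_level_vec K1 K2 a b \<bullet> simplex_vec j
      = ((N + 1) * two_level_weight K1 K2 a b j - 1) / (N * sqrt (Q / N))"
    by (simp add: v divide_inverse)
qed

text \<open>A coordinate t ((n + 1) s - 1) and the bottom coordinate -t satisfy the eigen-equation
  with the same constant exactly when t^(d-1) g(s) = c t s, where c = n \<mu>.\<close>

lemma level_value_diff: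
  fixes t s c :: real
  shows "(real n + 1) * (t * ((real n + 1) * s - 1)) ^ (d - 1) - c * (t * ((real n + 1) * s - 1))
      - ((real n + 1) * (- t) ^ (d - 1) - c * (- t))
    = (real n + 1) * (t ^ (d - 1) * g_fun n d s - c * t * s)"
  unfolding g_fun_def power_mult_distrib power_minus[of t] by (simp add: algebra_simps)

lemma level_value_eq_imp_g_ratio:
  fixes t s c :: real
  assumes "t > 0" "s > 0"
    and "(real n + 1) * (t * ((real n + 1) * s - 1)) ^ (d - 1) - c * (t * ((real n + 1) * s - 1))
      = (real n + 1) * (- t) ^ (d - 1) - c * (- t)"
  shows "g_fun n d s / s = c * t / t ^ (d - 1)"
proof -
  have "(real n + 1) * (t ^ (d - 1) * g_fun n d s - c * t * s) = 0"
    using level_value_diff[of n t s d c] assms(3) by simp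
  then have "t ^ (d - 1) * g_fun n d s = c * t * s"
    by simp
  with assms(1,2) show ?thesis
    by (simp add: field_simps)
qed

lemma two_level_vec_sum_power:
  fixes K1 K2 :: "'n::finite option set" and a b :: real
  assumes "K1 \<inter> K2 = {}" "real (card K1) * a + real (card K2) * b = 1"
    and "norm (two_level_vec K1 K2 a b) = 1" "even d"
  shows "(\<Sum>j\<in>UNIV. (two_level_vec K1 K2 a b \<bullet> simplex_vec j) ^ d)
      = two_level_eigenvalue CARD('n) d (card K1) (card K2) a b"
proof -
  define N Q where "N = real CARD('n)"
    and "Q = (N + 1) * a\<^sup>2 * real (card K1) + (N + 1) * b\<^sup>2 * real (card K2) - 1"
  note coords = inner_two_level_vec[OF assms(1-3), folded N_def, folded Q_def]
  define r where "r = N * sqrt (Q / N)"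
  have N0: "N > 0"
    by (simp add: N_def)
  have "r = sqrt (N * Q)"
    using N0 by (simp add: r_def times_sqrt_divide)
  then have r_pow: "r ^ d = N powr (real d / 2) * Q powr (real d / 2)"
    using N0 coords(1) by (simp add: sqrt_power_eq_powr powr_mult)
  have "r \<noteq> 0"
    using N0 coords(1) by (simp add: r_def)
  have "(\<Sum>j\<in>UNIV. (two_level_vec K1 K2 a b \<bullet> simplex_vec j) ^ d)
      = (\<Sum>j\<in>UNIV. if j \<in> K1 then ((N + 1) * a - 1) ^ d / r ^ d
          else if j \<in> K2 then ((N + 1) * b - 1) ^ d / r ^ d else 1 / r ^ d)"
    by (rule sum.cong) (auto simp: coords(2) r_def two_level_weight_def power_divide assms(4))
  also have "\<dots> = (real (card K1) * ((N + 1) * a - 1) ^ d + real (card K2) * ((N + 1) * b - 1) ^ d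
      + N + 1 - real (card K1) - real (card K2)) / r ^ d"
    unfolding sum_UNIV_if_mem_disjoint[OF assms(1)] using \<open>r \<noteq> 0\<close>
    by (simp add: N_def field_simps)
  also have "\<dots> = two_level_eigenvalue CARD('n) d (card K1) (card K2) a b"
    unfolding r_pow two_level_eigenvalue_def Q_def N_def ..
  finally show ?thesis .
qed

lemma two_level_tensor_eigenpair:
  fixes K1 K2 :: "'n::finite option set" and a b :: real
  assumes "K1 \<inter> K2 = {}" "real (card K1) * a + real (card K2) * b = 1"
    and "norm (two_level_vec K1 K2 a b) = 1" "even d" "d \<ge> 2"
    and "0 < a" "0 < b" "g_fun CARD('n) d a / a = g_fun CARD('n) d b / b"
  shows "tensor_eigenpair simplex_tensor d (two_level_vec K1 K2 a b)
    (two_level_eigenvalue CARD('n) d (card K1) (card K2) a b)"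
proof -
  define N Q where "N = real CARD('n)"
    and "Q = (N + 1) * a\<^sup>2 * real (card K1) + (N + 1) * b\<^sup>2 * real (card K2) - 1"
  note coords = inner_two_level_vec[OF assms(1-3), folded N_def, folded Q_def]
  define v where "v = two_level_vec K1 K2 a b"
  define t where "t = 1 / (N * sqrt (Q / N))"
  define G where "G = g_fun CARD('n) d a / a"
  define \<mu> where "\<mu> = t ^ (d - 1) * G / (N * t)"
  have N0: "N > 0"
    by (simp add: N_def)
  have "t > 0"
    using N0 coords(1) by (simp add: t_def)
  have level: "v \<bullet> simplex_vec j = t * ((N + 1) * two_level_weight K1 K2 a b j - 1)" for j
    by (simp add: v_def coords(2) t_def)
  have g_level: "g_fun CARD('n) d s = G * s" if "s \<in> {0, a, b}" for s
  proof -
    have "g_fun CARD('n) d 0 = 0"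
      by (simp add: g_fun_def)
    moreover have "G * a = g_fun CARD('n) d a"
      using assms(6) by (simp add: G_def)
    moreover have "G * b = g_fun CARD('n) d b"
      using assms(7) by (simp add: G_def assms(8))
    ultimately show ?thesis
      using that by auto
  qed
  have "(N + 1) * (v \<bullet> simplex_vec j) ^ (d - 1) - N * \<mu> * (v \<bullet> simplex_vec j)
      = (N + 1) * (- t) ^ (d - 1) - N * \<mu> * (- t)" for j
  proof -
    have "two_level_weight K1 K2 a b j \<in> {0, a, b}"
      by (simp add: two_level_weight_def)
    then have "t ^ (d - 1) * g_fun CARD('n) d (two_level_weight K1 K2 a b j)
        - N * \<mu> * t * two_level_weight K1 K2 a b j = 0"
      using N0 \<open>t > 0\<close> by (auto simp: g_level \<mu>_def)
    then show ?thesis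
      using level_value_diff[of "CARD('n)" t "two_level_weight K1 K2 a b j" d "N * \<mu>"]
      by (simp add: level N_def)
  qed
  moreover have "v \<noteq> 0"
    using assms(3) by (auto simp: v_def)
  ultimately have eig: "tensor_eigenpair simplex_tensor d v \<mu>"
    by (intro tensor_eigenpairI) (simp_all add: N_def)
  then have "\<mu> = two_level_eigenvalue CARD('n) d (card K1) (card K2) a b"
    using tensor_eigenpair_eigenvalue[OF eig] two_level_vec_sum_power[OF assms(1-4)] assms(3,5)
    by (simp add: v_def)
  with eig show ?thesis
    by (simp add: v_def)
qed

lemma two_level_coords_imp_two_level_vec:
  fixes v :: "real^'n::finite" and K1 K2 :: "'n option set"
  assumes "norm v = 1" "K1 \<inter> K2 = {}" "t > 0"
    and coords: "\<And>j. v \<bullet> simplex_vec j = t * ((real CARD('n) + 1) * two_level_weight K1 K2 a b j - 1)"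
  shows "real (card K1) * a + real (card K2) * b = 1" "v = two_level_vec K1 K2 a b"
proof -
  define N where "N = real CARD('n)"
  have N0: "N > 0"
    by (simp add: N_def)
  have "0 = (\<Sum>j\<in>UNIV. v \<bullet> simplex_vec j)"
    by (simp add: sum_inner_simplex_vec)
  also have "\<dots> = t * ((N + 1) * (real (card K1) * a + real (card K2) * b) - (N + 1))"
    by (simp add: coords sum_distrib_left[symmetric] sum_subtractf sum_two_level_weight[OF assms(2)]
        N_def flip: sum_distrib_left)
  finally have "t * ((N + 1) * (real (card K1) * a + real (card K2) * b) - (N + 1)) = 0"
    by (rule sym)
  moreover have "(t * (N + 1)) * (real (card K1) * a + real (card K2) * b - 1)
      = t * ((N + 1) * (real (card K1) * a + real (card K2) * b) - (N + 1))"
    by (simp add: algebra_simps)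
  ultimately have "(t * (N + 1)) * (real (card K1) * a + real (card K2) * b - 1) = 0"
    by simp
  then show sum1: "real (card K1) * a + real (card K2) * b = 1"
    using assms(3) N0 by simp
  define w where "w = a *\<^sub>R (\<Sum>k\<in>K1. simplex_vec k) + b *\<^sub>R (\<Sum>k\<in>K2. simplex_vec k :: real^'n)"
  have w: "w = (\<Sum>k\<in>UNIV. two_level_weight K1 K2 a b k *\<^sub>R simplex_vec k)"
    by (simp add: w_def two_level_comb[OF assms(2)])
  have v_eq: "v = (N * t) *\<^sub>R w"
    by (rule simplex_vec_inner_eqI)
      (use N0 in \<open>simp add: coords w inner_simplex_comb sum_two_level_weight[OF assms(2)] sum1 N_def\<close>)
  have "(norm w)\<^sup>2 = ((N + 1) * a\<^sup>2 * real (card K1) + (N + 1) * b\<^sup>2 * real (card K2) - 1) / N"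
    unfolding w norm_simplex_comb_squared sum_two_level_weight[OF assms(2)] sum1
    by (simp add: N_def algebra_simps)
  then have "norm w = sqrt (((N + 1) * a\<^sup>2 * real (card K1) + (N + 1) * b\<^sup>2 * real (card K2) - 1) / N)"
    by (simp add: real_sqrt_unique)
  moreover have "(N * t) * norm w = 1"
    using assms(1,3) N0 v_eq by simp
  then have "inverse (norm w) = N * t"
    by (metis inverse_unique mult.commute)
  ultimately show "v = two_level_vec K1 K2 a b"
    using v_eq by (simp add: two_level_vec_def w_def N_def)
qed

lemma three_valued_coords_two_level:
  fixes v :: "real^'n::finite"
  assumes "norm v = 1" "\<gamma> < \<beta>" "\<beta> < \<alpha>"
    and three: "\<forall>j. v \<bullet> simplex_vec j = \<alpha> \<or> v \<bullet> simplex_vec j = \<beta> \<or> v \<bullet> simplex_vec j = \<gamma>"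
    and "v \<bullet> simplex_vec ja = \<alpha>" "v \<bullet> simplex_vec jb = \<beta>" "v \<bullet> simplex_vec jg = \<gamma>"
  defines "K1 \<equiv> {j. v \<bullet> simplex_vec j = \<beta>}" and "K2 \<equiv> {j. v \<bullet> simplex_vec j = \<alpha>}"
    and "a \<equiv> (\<beta> - \<gamma>) / ((real CARD('n) + 1) * - \<gamma>)" and "b \<equiv> (\<alpha> - \<gamma>) / ((real CARD('n) + 1) * - \<gamma>)"
  shows "\<gamma> < 0" "K1 \<noteq> {}" "K2 \<noteq> {}" "K1 \<inter> K2 = {}" "card K1 \<le> CARD('n)" "card K2 \<le> CARD('n)"
    "0 < a" "a < b" "b \<le> 1" "real (card K1) * a + real (card K2) * b = 1"
    "\<And>j. v \<bullet> simplex_vec j = - \<gamma> * ((real CARD('n) + 1) * two_level_weight K1 K2 a b j - 1)"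
    "v = two_level_vec K1 K2 a b"
proof -
  define N k1 k2 where "N = real CARD('n)" and "k1 = real (card K1)" and "k2 = real (card K2)"
  have coords: "v \<bullet> simplex_vec j = (if j \<in> K1 then \<beta> else if j \<in> K2 then \<alpha> else \<gamma>)" for j
    using three assms(2,3) by (auto simp: K1_def K2_def)
  show disj: "K1 \<inter> K2 = {}"
    using assms(3) by (auto simp: K1_def K2_def)
  show "K1 \<noteq> {}" "K2 \<noteq> {}"
    using assms(2,3,5,6) by (auto simp: K1_def K2_def)
  have "K1 \<noteq> {}" "K2 \<noteq> {}" "jg \<notin> K1 \<union> K2"
    using assms(2,3,5-7) by (auto simp: K1_def K2_def)
  then have k_pos: "k1 \<ge> 1" "k2 \<ge> 1"
    by (simp_all add: k1_def k2_def Suc_le_eq card_gt_0_iff)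
  have "card (K1 \<union> K2) < card (UNIV :: 'n option set)"
    using \<open>jg \<notin> K1 \<union> K2\<close> by (intro psubset_card_mono) auto
  then have card_le: "card K1 + card K2 \<le> CARD('n)"
    using disj by (simp add: card_Un_disjoint)
  have "0 = (\<Sum>j\<in>UNIV. v \<bullet> simplex_vec j)"
    by (simp add: sum_inner_simplex_vec)
  also have "\<dots> = k1 * \<beta> + k2 * \<alpha> + (N + 1 - k1 - k2) * \<gamma>"
    by (simp add: coords sum_UNIV_if_mem_disjoint[OF disj] N_def k1_def k2_def)
  finally have balance: "k1 * \<beta> + k2 * \<alpha> + (N + 1 - k1 - k2) * \<gamma> = 0" ..
  show "\<gamma> < 0"
  proof (rule ccontr)
    assume "\<not> \<gamma> < 0"
    moreover have "k1 + k2 \<le> N"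
      using card_le by (simp add: k1_def k2_def N_def flip: of_nat_add)
    ultimately have "k1 * \<beta> \<ge> 0" "k2 * \<alpha> > 0" "(N + 1 - k1 - k2) * \<gamma> \<ge> 0"
      using assms(2,3) k_pos by auto
    with balance show False
      by linarith
  qed
  define t where "t = - \<gamma>"
  have t0: "t > 0"
    using \<open>\<gamma> < 0\<close> by (simp add: t_def)
  then have Nt: "(N + 1) * t > 0"
    by (simp add: N_def)
  have a: "a = (\<beta> - \<gamma>) / ((N + 1) * t)" and b: "b = (\<alpha> - \<gamma>) / ((N + 1) * t)"
    by (simp_all add: a_def b_def N_def t_def)
  show ab: "0 < a" "a < b"
    using assms(2,3) Nt by (simp_all add: a b divide_strict_right_mono)
  have scaled: "t * ((N + 1) * (x / ((N + 1) * t)) - 1) = x + \<gamma>" for x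
    using Nt by (simp add: field_simps t_def)
  have level: "v \<bullet> simplex_vec j = t * ((N + 1) * two_level_weight K1 K2 a b j - 1)" for j
  proof -
    consider "j \<in> K1" | "j \<notin> K1" "j \<in> K2" | "j \<notin> K1" "j \<notin> K2"
      by blast
    then show ?thesis
      by cases (simp_all only: coords two_level_weight_def if_True if_False a b scaled,
          simp_all add: t_def)
  qed
  then show "v \<bullet> simplex_vec j = - \<gamma> * ((real CARD('n) + 1) * two_level_weight K1 K2 a b j - 1)" for j
    by (simp add: t_def N_def)
  show "real (card K1) * a + real (card K2) * b = 1" "v = two_level_vec K1 K2 a b"
    using two_level_coords_imp_two_level_vec[OF assms(1) disj t0, of a b] level by (simp_all add: N_def)
  then have sum1: "k1 * a + k2 * b = 1"
    by (simp add: k1_def k2_def)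
  have "0 < k1 * a" "b \<le> k2 * b"
    using k_pos ab by simp_all
  with sum1 show "b \<le> 1"
    by linarith
  show "card K1 \<le> CARD('n)" "card K2 \<le> CARD('n)"
    using card_le by simp_all
qed

lemma three_valued_tensor_eigenpair_imp_two_level:
  fixes v :: "real^'n::finite"
  assumes "CARD('n) \<ge> 2" "even d" "d \<ge> 4" "norm v = 1"
    and eig: "tensor_eigenpair simplex_tensor d v \<mu>"
    and "\<gamma> < \<beta>" "\<beta> < \<alpha>"
    and "\<forall>j. v \<bullet> simplex_vec j = \<alpha> \<or> v \<bullet> simplex_vec j = \<beta> \<or> v \<bullet> simplex_vec j = \<gamma>"
    and "v \<bullet> simplex_vec ja = \<alpha>" "v \<bullet> simplex_vec jb = \<beta>" "v \<bullet> simplex_vec jg = \<gamma>"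
  shows "\<exists>K1 K2 a b. two_level_params d K1 K2 a b \<and> v = two_level_vec K1 K2 a b
    \<and> \<mu> = two_level_eigenvalue CARD('n) d (card K1) (card K2) a b"
proof -
  define K1 K2 a b where "K1 = {j. v \<bullet> simplex_vec j = \<beta>}" and "K2 = {j. v \<bullet> simplex_vec j = \<alpha>}"
    and "a = (\<beta> - \<gamma>) / ((real CARD('n) + 1) * - \<gamma>)" and "b = (\<alpha> - \<gamma>) / ((real CARD('n) + 1) * - \<gamma>)"
  note two_level = three_valued_coords_two_level[OF assms(4,6-11), folded K1_def K2_def a_def b_def]
  define t where "t = - \<gamma>"
  have t: "t > 0" "\<gamma> = - t"
    using two_level(1) by (simp_all add: t_def)
  have coords: "v \<bullet> simplex_vec j = t * ((real CARD('n) + 1) * two_level_weight K1 K2 a b j - 1)" for j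
    using two_level(11) by (simp add: t_def)
  have "jb \<in> K1" "ja \<in> K2" "jg \<notin> K1" "jg \<notin> K2"
    using assms(6,7,9-11) by (auto simp: K1_def K2_def)
  then have weights: "two_level_weight K1 K2 a b jb = a" "two_level_weight K1 K2 a b ja = b"
    using two_level(4) by (auto simp: two_level_weight_def)
  have "g_fun CARD('n) d s / s = real CARD('n) * \<mu> * t / t ^ (d - 1)"
    if "s > 0" "two_level_weight K1 K2 a b j = s" for s j
  proof (rule level_value_eq_imp_g_ratio[OF t(1) that(1)])
    have "(real CARD('n) + 1) * (v \<bullet> simplex_vec j) ^ (d - 1) - real CARD('n) * \<mu> * (v \<bullet> simplex_vec j)
        = (real CARD('n) + 1) * (v \<bullet> simplex_vec jg) ^ (d - 1) - real CARD('n) * \<mu> * (v \<bullet> simplex_vec jg)"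
      using tensor_eigenpair_coord_eq[OF eig] by simp
    moreover have "v \<bullet> simplex_vec j = t * ((real CARD('n) + 1) * s - 1)"
      using coords[of j] that(2) by simp
    moreover have "v \<bullet> simplex_vec jg = - t"
      using assms(11) t(2) by simp
    ultimately show "(real CARD('n) + 1) * (t * ((real CARD('n) + 1) * s - 1)) ^ (d - 1)
        - real CARD('n) * \<mu> * (t * ((real CARD('n) + 1) * s - 1))
        = (real CARD('n) + 1) * (- t) ^ (d - 1) - real CARD('n) * \<mu> * (- t)"
      by simp
  qed
  then have g_ratio: "g_fun CARD('n) d a / a = g_fun CARD('n) d b / b"
    using two_level(7,8) weights by (metis order.strict_trans)
  note between = g_ratio_eq_imp_s_star_between[OF assms(1-3) two_level(7,8) g_ratio]
  have "\<mu> = two_level_eigenvalue CARD('n) d (card K1) (card K2) a b"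
    using tensor_eigenpair_unique_eigenvalue[OF eig]
      two_level_tensor_eigenpair[OF two_level(4,10) _ assms(2) _ two_level(7) _ g_ratio] two_level(7,8,12)
      assms(3,4) by simp
  then show ?thesis
    using two_level(2-7,9,10,12) between g_ratio unfolding two_level_params_def by blast
qed

lemma tensor_eigenpair_even_iff:
  fixes v :: "real^'n::finite"
  assumes "CARD('n) \<ge> 2" "even d" "d \<ge> 4" "norm v = 1"
  shows "tensor_eigenpair simplex_tensor d v \<mu> \<longleftrightarrow>
    (\<exists>K. K \<noteq> {} \<and> card K \<le> CARD('n) \<and> v = unit_frame_sum K
      \<and> \<mu> = subset_eigenvalue CARD('n) d (card K))
    \<or> (\<exists>K1 K2 a b. two_level_params d K1 K2 a b \<and> v = two_level_vec K1 K2 a b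
      \<and> \<mu> = two_level_eigenvalue CARD('n) d (card K1) (card K2) a b)"
    (is "_ \<longleftrightarrow> ?subset \<or> ?two_level")
proof
  assume eig: "tensor_eigenpair simplex_tensor d v \<mu>"
  from tensor_eigenpair_even_at_most_three_valued[OF assms(2,3) eig] show "?subset \<or> ?two_level"
  proof (elim disjE exE conjE)
    fix \<alpha> \<beta>
    assume "\<beta> < \<alpha>" "\<forall>j. v \<bullet> simplex_vec j = \<alpha> \<or> v \<bullet> simplex_vec j = \<beta>"
    then have ?subset
      using two_valued_tensor_eigenpair_imp_subset[OF eig assms(4)] assms(3) by simp
    then show ?thesis ..
  next
    fix \<alpha> \<beta> \<gamma> ja jb jg
    assume "\<gamma> < \<beta>" "\<beta> < \<alpha>"
      "\<forall>j. v \<bullet> simplex_vec j = \<alpha> \<or> v \<bullet> simplex_vec j = \<beta> \<or> v \<bullet> simplex_vec j = \<gamma>"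
      "v \<bullet> simplex_vec ja = \<alpha>" "v \<bullet> simplex_vec jb = \<beta>" "v \<bullet> simplex_vec jg = \<gamma>"
    then have ?two_level
      by (rule three_valued_tensor_eigenpair_imp_two_level[OF assms eig])
    then show ?thesis ..
  qed
next
  assume "?subset \<or> ?two_level"
  then show "tensor_eigenpair simplex_tensor d v \<mu>"
  proof (elim disjE exE conjE)
    fix K :: "'n option set"
    assume "K \<noteq> {}" "card K \<le> CARD('n)" "v = unit_frame_sum K" "\<mu> = subset_eigenvalue CARD('n) d (card K)"
    then show ?thesis
      using unit_frame_sum_tensor_eigenpair[of K d] assms(3) by simp
  next
    fix K1 K2 :: "'n option set" and a b
    assume params: "two_level_params d K1 K2 a b" and v: "v = two_level_vec K1 K2 a b"
      and "\<mu> = two_level_eigenvalue CARD('n) d (card K1) (card K2) a b"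
    moreover have "0 < a" "0 < b"
      using params by (auto simp: two_level_params_def)
    ultimately show ?thesis
      using two_level_tensor_eigenpair[of K1 K2 a b d] assms(2-4)
      by (simp add: two_level_params_def)
  qed
qed

lemma tensor_eigenpair_even_iff_pos:
  fixes v :: "real^'n::finite"
  assumes "CARD('n) \<ge> 2" "even d" "d \<ge> 4" "norm v = 1"
  shows "tensor_eigenpair simplex_tensor d v \<mu> \<longleftrightarrow>
    (\<exists>K. K \<noteq> {} \<and> card K \<le> CARD('n) \<and> v = unit_frame_sum K
      \<and> \<mu> = subset_eigenvalue CARD('n) d (card K) \<and> \<mu> > 0)
    \<or> (\<exists>K1 K2 a b. two_level_params d K1 K2 a b \<and> v = two_level_vec K1 K2 a b
      \<and> \<mu> = two_level_eigenvalue CARD('n) d (card K1) (card K2) a b \<and> \<mu> > 0)"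
proof
  assume eig: "tensor_eigenpair simplex_tensor d v \<mu>"
  then have "\<mu> > 0"
    using tensor_eigenpair_even_eigenvalue_pos[OF eig assms(4,2)] assms(3) by simp
  with eig show "(\<exists>K. K \<noteq> {} \<and> card K \<le> CARD('n) \<and> v = unit_frame_sum K
      \<and> \<mu> = subset_eigenvalue CARD('n) d (card K) \<and> \<mu> > 0)
    \<or> (\<exists>K1 K2 a b. two_level_params d K1 K2 a b \<and> v = two_level_vec K1 K2 a b
      \<and> \<mu> = two_level_eigenvalue CARD('n) d (card K1) (card K2) a b \<and> \<mu> > 0)"
    unfolding tensor_eigenpair_even_iff[OF assms] by blast
qed (unfold tensor_eigenpair_even_iff[OF assms], blast)

theorem mainTheorem6:
  fixes d :: nat
  assumes "CARD('n::finite) \<ge> 2" and "d \<ge> 2"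
  defines "n \<equiv> CARD('n)"
  defines "V \<equiv> (simplex_vec :: 'n option \<Rightarrow> real^'n)"
  defines "T \<equiv> (simplex_tensor :: 'n list \<Rightarrow> real)"
  shows
   "(d = 2 \<longrightarrow>
       (\<forall>v::real^'n. norm v = 1 \<longrightarrow> tensor_eigenpair T d v (1 + 1 / real n)))
  \<and> ((odd d \<and> d \<ge> 3) \<longrightarrow>
       (\<forall>K::'n option set. K \<noteq> {} \<and> card K \<le> n \<longrightarrow>
          norm (\<Sum>k\<in>K. V k) = sqrt (real (card K) * (real n + 1 - real (card K)) / real n))
     \<and> (\<forall>(v::real^'n) \<mu>. norm v = 1 \<longrightarrow>
          (tensor_eigenpair T d v \<mu> \<longleftrightarrow>
            (\<exists>K::'n option set. K \<noteq> {} \<and> card K \<le> n \<and>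
               v = inverse (norm (\<Sum>k\<in>K. V k)) *\<^sub>R (\<Sum>k\<in>K. V k) \<and>
               \<mu> = ((real n + 1 - real (card K)) ^ (d - 1) - real (card K) ^ (d - 1)) /
                   (real n powr (real d / 2) *
                    (real (card K) * (real n + 1 - real (card K))) powr (real d / 2 - 1)))))
     \<and> (\<forall>K::'n option set. K \<noteq> {} \<and> card K \<le> n \<longrightarrow>
          (((real n + 1 - real (card K)) ^ (d - 1) - real (card K) ^ (d - 1)) /
              (real n powr (real d / 2) *
               (real (card K) * (real n + 1 - real (card K))) powr (real d / 2 - 1)) = 0
           \<longleftrightarrow> 2 * card K = n + 1))
     \<and> (even n \<longrightarrow> (\<forall>(v::real^'n) \<mu>. norm v = 1 \<and> tensor_eigenpair T d v \<mu> \<longrightarrow> \<mu> \<noteq> 0)))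
  \<and> ((even d \<and> d \<ge> 4) \<longrightarrow>
       (\<forall>(v::real^'n) \<mu>. norm v = 1 \<longrightarrow>
          (tensor_eigenpair T d v \<mu> \<longleftrightarrow>
            ((\<exists>K::'n option set. K \<noteq> {} \<and> card K \<le> n \<and>
               v = inverse (norm (\<Sum>k\<in>K. V k)) *\<^sub>R (\<Sum>k\<in>K. V k) \<and>
               \<mu> = ((real n + 1 - real (card K)) ^ (d - 1) + real (card K) ^ (d - 1)) /
                   (real n powr (real d / 2) *
                    (real (card K) * (real n + 1 - real (card K))) powr (real d / 2 - 1)) \<and>
               \<mu> > 0)
           \<or> (\<exists>(K1::'n option set) (K2::'n option set) (a::real) (b::real).
               K1 \<noteq> {} \<and> K2 \<noteq> {} \<and> K1 \<inter> K2 = {} \<and> card K1 \<le> n \<and> card K2 \<le> n \<and>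
               0 < a \<and> a \<le> s_star n d \<and> s_star n d < b \<and> b \<le> 1 \<and>
               real (card K1) * a + real (card K2) * b = 1 \<and>
               g_fun n d a / a = g_fun n d b / b \<and>
               v = inverse (sqrt (((real n + 1) * a\<^sup>2 * real (card K1)
                                   + (real n + 1) * b\<^sup>2 * real (card K2) - 1) / real n))
                   *\<^sub>R (a *\<^sub>R (\<Sum>k\<in>K1. V k) + b *\<^sub>R (\<Sum>k\<in>K2. V k)) \<and>
               \<mu> = (real (card K1) * ((real n + 1) * a - 1) ^ d
                     + real (card K2) * ((real n + 1) * b - 1) ^ d
                     + real n + 1 - real (card K1) - real (card K2)) /
                   (real n powr (real d / 2) *
                    ((real n + 1) * a\<^sup>2 * real (card K1)
                      + (real n + 1) * b\<^sup>2 * real (card K2) - 1) powr (real d / 2)) \<and>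
               \<mu> > 0)))))"
  unfolding n_def V_def T_def
  apply (intro conjI impI allI; (elim conjE)?)
  subgoal for v
    using tensor_eigenpair_order_two[of v] by (metis norm_zero zero_neq_one)
  subgoal for K
    by (rule norm_frame_sum)
  subgoal premises prems for v \<mu>
    using tensor_eigenpair_odd_iff[OF prems(2,3,1), of \<mu>]
    by (simp only: unit_frame_sum_def subset_eigenvalue_odd[OF prems(2)])
  subgoal premises prems for K
  proof -
    have "0 < card K"
      using prems(3) by (simp add: card_gt_0_iff)
    from subset_eigenvalue_eq_0_iff[OF prems(1) assms(2) this prems(4)] show ?thesis
      by (simp only: subset_eigenvalue_odd[OF prems(1)])
  qed
  subgoal for v \<mu>
    using tensor_eigenpair_odd_eigenvalue_nonzero[of d v \<mu>] by blast
  subgoal premises prems for v \<mu>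
    using tensor_eigenpair_even_iff_pos[OF assms(1) prems(2,3,1), of \<mu>]
    by (simp only: unit_frame_sum_def subset_eigenvalue_even[OF prems(2)] two_level_params_def
        two_level_vec_def two_level_eigenvalue_def conj_assoc)
  done

end
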